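(* In the setting of the context, there exists an integer $\ell_0\le 6nd$ such that the following holds. If $\bm f'\in Y^{M,d}$ satisfies $L(\bm f')(\zeta)=0$ for all $\zeta\in b\Delta$ and $\frac{\partial^j\bm f'}{\partial\zeta^j}(1)=0$ for $j=0,1,\dots,\ell_0$, then $\bm f'=0$. In other words, the map $\bm f'\mapsto(\bm f'(1),\partial\bm f'(1),\dots,\partial^{\ell_0}\bm f'(1))\in\mathbb C^{(2n+2)(\ell_0+1)}$ is injective on $\ker L$.
   Context: Setting: $\Delta$ is the unit disc and $b\Delta$ the unit circle. $M=(m_1,\dots,m_n)$ is a vector of positive even integers, and $M\cdot J=\sum m_ij_i$. $P:\mathbb C^n\to\mathbb R$ is a real polynomial with $P(t^{m_1}z_1,\dots,t^{m_n}z_n,t^{m_1}\bar z_1,\dots)=t^dP(z,\bar z)$ for real $t$, with $d$ even. Write $P=\sum_{M\cdot J+M\cdot K=d}\alpha_{JK}z^J\bar z^K$, with $P\not\equiv0$ and $\alpha_{JK}=0$ if $J=0$ or $K=0$. $k_0$ is the largest $k$ with $d/2\le k\le d-1$ such that $\alpha_{JK}\ne0$ for some $M\cdot K=k$. Admissible vector: $h^v(\zeta)=((1-\zeta)^{m_1}v_1,\dots,(1-\zeta)^{m_n}v_n)$ and $Q^v_{i\bar j}(\zeta)=\zeta^{k_0}P_{z_i\bar z_j}(v,((-1/\zeta)^{m_l}\bar v_l)_l)$, a holomorphic polynomial (with $z,\bar z$ independent variables in $P_{z_i\bar z_j}$). Let $Q^v=\det(Q^v_{i\bar j})$. The vector $v$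 is admissible if there is $g^v$, continuous on $\overline\Delta$ and holomorphic on $\Delta$, with $(h^v,g^v)(b\Delta)\subset S_P=\{\mathrm{Re}\,w=P\}$, $(h^v,g^v)(\Delta)\not\subset S_P$, and $Q^v\ne0$ on $b\Delta$. Fix such $v$ with $g^v(1)=0$. Function spaces: fix $k\ge1$ and $0<\alpha<1$. $\mathcal A^{k,\alpha}$ is the space of $C^{k,\alpha}$ complex functions on $b\Delta$ that extend holomorphically to $\Delta$ (continuous on $\overline\Delta$). $\mathcal A^{k,\alpha}_{0^m}=\{(1-\zeta)^mf:f\in\mathcal A^{k,\alpha}\}$. Define $$Y^{M,d}=\prod_{i=1}^n\mathcal A^{k,\alpha}_{0^{m_i}}\times\mathcal A^{k,\alpha}_{0^1}\times\prod_{i=1}^n\mathcal A^{k,\alpha}_{0^{d-m_i}}\times\mathcal A^{k,\alpha},$$ with elements written $\bm f=(z,w,\tilde z,\tilde w)$-components $(h,g,\tilde h,\tilde g)$. Initial disc: $\bm f^0=(h^v,g^v,\tilde h^0,-\zeta^{k_0}/2)$, where $\tilde h^0$ is the holomorphic extension of $\zeta^{k_0}P_z(h^v,\overline{h^v})$. For $\zeta\in b\Delta$, define the real functions $\tilde\rho(\zeta)=(\tilde\rho_1,\dots,\tilde\rho_{2n+2})$ of $(z,w,\tilde z,\tilde w)\in\mathbb C^{2n+2}$ by: - $\tilde\rho_1=-\mathrm{Re}\,w+P(z,\bar z)$; - $\tilde\rho_{2i}=2\,\mathrm{Re}\big(\tilde z_i+2\tilde wP_{z_i}(z,\bar z)\big)$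 and $\tilde\rho_{2i+1}=-2\,\mathrm{Im}\big(\tilde z_i+2\tilde wP_{z_i}(z,\bar z)\big)$ for $i=1,\dots,n$; - $\tilde\rho_{2n+2}=i(\zeta^{-k_0}\tilde w-\zeta^{k_0}\overline{\tilde w})$. These are defining equations of $\{(z,w,\tilde z,\tilde w):(z,w)\in S_P,(\tilde z,\tilde w)\in\zeta^{k_0}(\mathbb R\setminus\{0\})(P_z,-1/2)\}$. The linear operator $L$ on $Y^{M,d}$ is the linearization at $\bm f^0$ of $\bm f\mapsto\tilde\rho(\bm f)$: $$L(\bm f')(\zeta)=\frac{d}{dt}\Big|_{t=0}\tilde\rho(\zeta)\big(\bm f^0(\zeta)+t\bm f'(\zeta)\big),\qquad\zeta\in b\Delta.$$ Equivalently, $L(\bm f')=2\,\mathrm{Re}[\overline{G(\zeta)}\bm f']$ with $G=(\tilde\rho_{\bar z},\tilde\rho_{\bar w},\tilde\rho_{\bar{\tilde z}},\tilde\rho_{\bar{\tilde w}})(\bm f^0)$. *)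

theory Defs
  imports "HOL-Analysis.Analysis"
begin

text \<open>Multi-indices are functions 'n => nat on a finite coordinate type 'n (n = CARD('n)).\<close>

definition Mdot :: "('n::finite \<Rightarrow> nat) \<Rightarrow> ('n \<Rightarrow> nat) \<Rightarrow> nat" where
  "Mdot M J = (\<Sum>i\<in>UNIV. M i * J i)"

definition idx :: "('n::finite \<Rightarrow> nat) \<Rightarrow> nat \<Rightarrow> (('n \<Rightarrow> nat) \<times> ('n \<Rightarrow> nat)) set" where
  "idx M d = {(J, K). Mdot M J + Mdot M K = d}"

definition mono :: "('n::finite \<Rightarrow> nat) \<Rightarrow> ('n \<Rightarrow> complex) \<Rightarrow> complex" where
  "mono J z = (\<Prod>l\<in>UNIV. z l ^ J l)"

definition dmono :: "('n::finite \<Rightarrow> nat) \<Rightarrow> 'n \<Rightarrow> ('n \<Rightarrow> complex) \<Rightarrow> complex" where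
  "dmono J i z = of_nat (J i) * (\<Prod>l\<in>UNIV. z l ^ (if l = i then J l - 1 else J l))"

text \<open>Complexified polynomial P(z,w) = sum alpha_JK z^J w^K, with z, w independent;
  the real polynomial is P(z, conj z).\<close>
definition Ppoly :: "('n::finite \<Rightarrow> nat) \<Rightarrow> nat \<Rightarrow> (('n \<Rightarrow> nat) \<Rightarrow> ('n \<Rightarrow> nat) \<Rightarrow> complex)
    \<Rightarrow> ('n \<Rightarrow> complex) \<Rightarrow> ('n \<Rightarrow> complex) \<Rightarrow> complex" where
  "Ppoly M d \<alpha> z w = (\<Sum>(J, K)\<in>idx M d. \<alpha> J K * mono J z * mono K w)"

definition Pz :: "('n::finite \<Rightarrow> nat) \<Rightarrow> nat \<Rightarrow> (('n \<Rightarrow> nat) \<Rightarrow> ('n \<Rightarrow> nat) \<Rightarrow> complex)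
    \<Rightarrow> 'n \<Rightarrow> ('n \<Rightarrow> complex) \<Rightarrow> ('n \<Rightarrow> complex) \<Rightarrow> complex" where
  "Pz M d \<alpha> i z w = (\<Sum>(J, K)\<in>idx M d. \<alpha> J K * dmono J i z * mono K w)"

definition Pzw :: "('n::finite \<Rightarrow> nat) \<Rightarrow> nat \<Rightarrow> (('n \<Rightarrow> nat) \<Rightarrow> ('n \<Rightarrow> nat) \<Rightarrow> complex)
    \<Rightarrow> 'n \<Rightarrow> 'n \<Rightarrow> ('n \<Rightarrow> complex) \<Rightarrow> ('n \<Rightarrow> complex) \<Rightarrow> complex" where
  "Pzw M d \<alpha> i j z w = (\<Sum>(J, K)\<in>idx M d. \<alpha> J K * dmono J i z * dmono K j w)"

text \<open>Real polynomial P(z, zbar) (real-valued by hypothesis; Re is then harmless).\<close>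
definition Preal :: "('n::finite \<Rightarrow> nat) \<Rightarrow> nat \<Rightarrow> (('n \<Rightarrow> nat) \<Rightarrow> ('n \<Rightarrow> nat) \<Rightarrow> complex)
    \<Rightarrow> ('n \<Rightarrow> complex) \<Rightarrow> real" where
  "Preal M d \<alpha> z = Re (Ppoly M d \<alpha> z (\<lambda>l. cnj (z l)))"

definition kzero :: "('n::finite \<Rightarrow> nat) \<Rightarrow> nat \<Rightarrow> (('n \<Rightarrow> nat) \<Rightarrow> ('n \<Rightarrow> nat) \<Rightarrow> complex) \<Rightarrow> nat" where
  "kzero M d \<alpha> = (GREATEST k. d div 2 \<le> k \<and> k \<le> d - 1 \<and> (\<exists>J K. \<alpha> J K \<noteq> 0 \<and> Mdot M K = k))"

definition hv :: "('n::finite \<Rightarrow> nat) \<Rightarrow> ('n \<Rightarrow> complex) \<Rightarrow> complex \<Rightarrow> ('n \<Rightarrow> complex)" where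
  "hv M v \<zeta> = (\<lambda>i. (1 - \<zeta>) ^ M i * v i)"

definition Qv_entry :: "('n::finite \<Rightarrow> nat) \<Rightarrow> nat \<Rightarrow> (('n \<Rightarrow> nat) \<Rightarrow> ('n \<Rightarrow> nat) \<Rightarrow> complex)
    \<Rightarrow> ('n \<Rightarrow> complex) \<Rightarrow> 'n \<Rightarrow> 'n \<Rightarrow> complex \<Rightarrow> complex" where
  "Qv_entry M d \<alpha> v i j \<zeta> =
     \<zeta> ^ kzero M d \<alpha> * Pzw M d \<alpha> i j v (\<lambda>l. (- 1 / \<zeta>) ^ M l * cnj (v l))"

definition Qv :: "('n::finite \<Rightarrow> nat) \<Rightarrow> nat \<Rightarrow> (('n \<Rightarrow> nat) \<Rightarrow> ('n \<Rightarrow> nat) \<Rightarrow> complex)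
    \<Rightarrow> ('n \<Rightarrow> complex) \<Rightarrow> complex \<Rightarrow> complex" where
  "Qv M d \<alpha> v \<zeta> = det (\<chi> i j. Qv_entry M d \<alpha> v i j \<zeta> :: complex ^ 'n ^ 'n)"

definition admissible_pair :: "('n::finite \<Rightarrow> nat) \<Rightarrow> nat \<Rightarrow> (('n \<Rightarrow> nat) \<Rightarrow> ('n \<Rightarrow> nat) \<Rightarrow> complex)
    \<Rightarrow> ('n \<Rightarrow> complex) \<Rightarrow> (complex \<Rightarrow> complex) \<Rightarrow> bool" where
  "admissible_pair M d \<alpha> v g \<longleftrightarrow>
     continuous_on (cball 0 1) g \<and> g holomorphic_on ball 0 1 \<and>
     (\<forall>\<zeta>\<in>sphere 0 1. Re (g \<zeta>) = Preal M d \<alpha> (hv M v \<zeta>)) \<and>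
     (\<exists>\<zeta>\<in>ball 0 1. Re (g \<zeta>) \<noteq> Preal M d \<alpha> (hv M v \<zeta>)) \<and>
     (\<forall>\<zeta>\<in>sphere 0 1. Qv M d \<alpha> v \<zeta> \<noteq> 0)"

definition Cka_circle :: "nat \<Rightarrow> real \<Rightarrow> (complex \<Rightarrow> complex) \<Rightarrow> bool" where
  "Cka_circle k a f \<longleftrightarrow>
     (\<exists>D :: nat \<Rightarrow> real \<Rightarrow> complex.
        (\<forall>\<theta>. D 0 \<theta> = f (cis \<theta>)) \<and>
        (\<forall>i<k. \<forall>\<theta>. (D i has_vector_derivative D (Suc i) \<theta>) (at \<theta>)) \<and>
        (\<exists>C. \<forall>s t. norm (D k s - D k t) \<le> C * \<bar>s - t\<bar> powr a))"

definition A_space :: "nat \<Rightarrow> real \<Rightarrow> (complex \<Rightarrow> complex) set" where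
  "A_space k a = {f. continuous_on (cball 0 1) f \<and> f holomorphic_on ball 0 1 \<and> Cka_circle k a f}"

definition A0_space :: "nat \<Rightarrow> real \<Rightarrow> nat \<Rightarrow> (complex \<Rightarrow> complex) set" where
  "A0_space k a m = {F. \<exists>f\<in>A_space k a. \<forall>\<zeta>\<in>cball 0 1. F \<zeta> = (1 - \<zeta>) ^ m * f \<zeta>}"

type_synonym 'n disc4 =
  "('n \<Rightarrow> complex \<Rightarrow> complex) \<times> (complex \<Rightarrow> complex) \<times> ('n \<Rightarrow> complex \<Rightarrow> complex) \<times> (complex \<Rightarrow> complex)"

definition Y_space :: "nat \<Rightarrow> real \<Rightarrow> ('n::finite \<Rightarrow> nat) \<Rightarrow> nat \<Rightarrow> 'n disc4 set" where
  "Y_space k a M d = {(h, g, ht, gt).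
      (\<forall>i. h i \<in> A0_space k a (M i)) \<and> g \<in> A0_space k a 1 \<and>
      (\<forall>i. ht i \<in> A0_space k a (d - M i)) \<and> gt \<in> A_space k a}"

type_synonym 'n pt4 = "('n \<Rightarrow> complex) \<times> complex \<times> ('n \<Rightarrow> complex) \<times> complex"

definition rho1 :: "('n::finite \<Rightarrow> nat) \<Rightarrow> nat \<Rightarrow> (('n \<Rightarrow> nat) \<Rightarrow> ('n \<Rightarrow> nat) \<Rightarrow> complex) \<Rightarrow> 'n pt4 \<Rightarrow> real" where
  "rho1 M d \<alpha> p = (case p of (z, w, zt, wt) \<Rightarrow> - Re w + Preal M d \<alpha> z)"

definition rhoRe :: "('n::finite \<Rightarrow> nat) \<Rightarrow> nat \<Rightarrow> (('n \<Rightarrow> nat) \<Rightarrow> ('n \<Rightarrow> nat) \<Rightarrow> complex) \<Rightarrow> 'n \<Rightarrow> 'n pt4 \<Rightarrow> real" where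
  "rhoRe M d \<alpha> i p = (case p of (z, w, zt, wt) \<Rightarrow>
      2 * Re (zt i + 2 * wt * Pz M d \<alpha> i z (\<lambda>l. cnj (z l))))"

definition rhoIm :: "('n::finite \<Rightarrow> nat) \<Rightarrow> nat \<Rightarrow> (('n \<Rightarrow> nat) \<Rightarrow> ('n \<Rightarrow> nat) \<Rightarrow> complex) \<Rightarrow> 'n \<Rightarrow> 'n pt4 \<Rightarrow> real" where
  "rhoIm M d \<alpha> i p = (case p of (z, w, zt, wt) \<Rightarrow>
      - 2 * Im (zt i + 2 * wt * Pz M d \<alpha> i z (\<lambda>l. cnj (z l))))"

text \<open>i (zeta^{-k0} w~ - zeta^{k0} conj w~), which is real; we take its real part.\<close>
definition rhoLast :: "nat \<Rightarrow> complex \<Rightarrow> 'n pt4 \<Rightarrow> real" where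
  "rhoLast k0 \<zeta> p = (case p of (z, w, zt, wt) \<Rightarrow>
      Re (\<i> * (inverse \<zeta> ^ k0 * wt - \<zeta> ^ k0 * cnj wt)))"

text \<open>The initial disc f^0 evaluated on the circle (h~^0 agrees there with
  zeta^{k0} P_z(h^v, conj h^v), and only boundary values enter L).\<close>
definition f0_pt :: "('n::finite \<Rightarrow> nat) \<Rightarrow> nat \<Rightarrow> (('n \<Rightarrow> nat) \<Rightarrow> ('n \<Rightarrow> nat) \<Rightarrow> complex)
    \<Rightarrow> ('n \<Rightarrow> complex) \<Rightarrow> (complex \<Rightarrow> complex) \<Rightarrow> complex \<Rightarrow> 'n pt4" where
  "f0_pt M d \<alpha> v g \<zeta> =
     (hv M v \<zeta>, g \<zeta>,
      (\<lambda>i. \<zeta> ^ kzero M d \<alpha> * Pz M d \<alpha> i (hv M v \<zeta>) (\<lambda>l. cnj (hv M v \<zeta> l))),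
      - (\<zeta> ^ kzero M d \<alpha>) / 2)"

definition line_pt :: "'n pt4 \<Rightarrow> 'n disc4 \<Rightarrow> complex \<Rightarrow> real \<Rightarrow> 'n pt4" where
  "line_pt p F \<zeta> t = (case p of (z, w, zt, wt) \<Rightarrow> case F of (h, g, ht, gt) \<Rightarrow>
      ((\<lambda>i. z i + of_real t * h i \<zeta>), w + of_real t * g \<zeta>,
       (\<lambda>i. zt i + of_real t * ht i \<zeta>), wt + of_real t * gt \<zeta>))"

definition L_vanishes_at :: "('n::finite \<Rightarrow> nat) \<Rightarrow> nat \<Rightarrow> (('n \<Rightarrow> nat) \<Rightarrow> ('n \<Rightarrow> nat) \<Rightarrow> complex)
    \<Rightarrow> ('n \<Rightarrow> complex) \<Rightarrow> (complex \<Rightarrow> complex) \<Rightarrow> 'n disc4 \<Rightarrow> complex \<Rightarrow> bool" where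
  "L_vanishes_at M d \<alpha> v g F \<zeta> \<longleftrightarrow>
     (let p = f0_pt M d \<alpha> v g \<zeta> in
       ((\<lambda>t. rho1 M d \<alpha> (line_pt p F \<zeta> t)) has_real_derivative 0) (at 0) \<and>
       (\<forall>i. ((\<lambda>t. rhoRe M d \<alpha> i (line_pt p F \<zeta> t)) has_real_derivative 0) (at 0)) \<and>
       (\<forall>i. ((\<lambda>t. rhoIm M d \<alpha> i (line_pt p F \<zeta> t)) has_real_derivative 0) (at 0)) \<and>
       ((\<lambda>t. rhoLast (kzero M d \<alpha>) \<zeta> (line_pt p F \<zeta> t)) has_real_derivative 0) (at 0))"

definition derivs_vanish_at_1 :: "nat \<Rightarrow> (complex \<Rightarrow> complex) \<Rightarrow> bool" where
  "derivs_vanish_at_1 l f \<longleftrightarrow>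
     (\<exists>e>0. \<exists>D :: nat \<Rightarrow> complex \<Rightarrow> complex.
        (\<forall>w\<in>cball 0 1 \<inter> ball 1 e. D 0 w = f w) \<and>
        (\<forall>i<l. \<forall>w\<in>cball 0 1 \<inter> ball 1 e. (Suc i < l \<or> w = 1) \<longrightarrow>
            (D i has_field_derivative D (Suc i) w) (at w within cball 0 1 \<inter> ball 1 e)) \<and>
        (\<forall>j\<le>l. D j 1 = 0))"

definition disc4_derivs_vanish_at_1 :: "nat \<Rightarrow> 'n disc4 \<Rightarrow> bool" where
  "disc4_derivs_vanish_at_1 l F = (case F of (h, g, ht, gt) \<Rightarrow>
     (\<forall>i. derivs_vanish_at_1 l (h i)) \<and> derivs_vanish_at_1 l g \<and>
     (\<forall>i. derivs_vanish_at_1 l (ht i)) \<and> derivs_vanish_at_1 l gt)"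

definition disc4_zero :: "'n disc4 \<Rightarrow> bool" where
  "disc4_zero F = (case F of (h, g, ht, gt) \<Rightarrow> \<forall>\<zeta>\<in>cball 0 1.
     (\<forall>i. h i \<zeta> = 0) \<and> g \<zeta> = 0 \<and> (\<forall>i. ht i \<zeta> = 0) \<and> gt \<zeta> = 0)"

end

theory Submission
  imports Defs "HOL-Complex_Analysis.Complex_Analysis" "HOL-Computational_Algebra.Polynomial"
begin

text \<open>Everything rests on a reflection principle for the disc algebra: if \<open>\<phi> = \<zeta>\<^sup>N conj \<psi>\<close> on
  the circle for \<open>\<phi>, \<psi>\<close> holomorphic in the disc and continuous up to the boundary, then \<open>\<phi>\<close> is a
  polynomial of degree at most \<open>N\<close>; a polynomial of degree at most \<open>\<ell>\<^sub>0\<close> all of whose derivatives up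
  to order \<open>\<ell>\<^sub>0\<close> vanish at \<open>1\<close> is zero.

  Let \<open>(h, g, h~, g~)\<close> lie in the kernel of \<open>L\<close>. The last component says that \<open>\<zeta>\<^sup>-\<^sup>k\<^sup>0 g~\<close> is real
  on the circle, i.e. \<open>g~ = \<zeta>\<^sup>2\<^sup>k\<^sup>0 conj g~\<close>, so \<open>g~ = 0\<close>. Writing \<open>h\<^sub>j = (1 - \<zeta>)\<^sup>m\<^sup>j f\<^sub>j\<close> and
  \<open>h~\<^sub>i = (1 - \<zeta>)\<^sup>d\<^sup>-\<^sup>m\<^sup>i f~\<^sub>i\<close>, weighted homogeneity turns the middle components into a linear system
  \<open>B = Q\<^sup>v conj((-\<zeta>)\<^sup>M f)\<close> on the circle with \<open>B\<close> holomorphic and \<open>Q\<^sup>v\<close> a matrix of polynomials of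
  degree at most \<open>k\<^sub>0\<close>. Cramer's rule gives a reflection identity of order \<open>n k\<^sub>0\<close> for
  \<open>det\<^sup>* h\<^sub>j\<close>, where \<open>det\<^sup>*\<close> is the reflected polynomial \<open>det Q\<^sup>v\<close>, nonzero at \<open>1\<close> by admissibility;
  hence \<open>h = 0\<close>. Then the middle components give \<open>h~ = 0\<close>, and the first one says that \<open>g\<close> has
  zero real part on the circle, so \<open>g\<close> is constant, and \<open>g(1) = 0\<close>. Since \<open>k\<^sub>0 < d\<close>, the order
  \<open>\<ell>\<^sub>0 = 6 n d\<close> is more than enough.\<close>

section \<open>The disc algebra and the reflection principle\<close>

definition disc_algebra :: "(complex \<Rightarrow> complex) \<Rightarrow> bool" where
  "disc_algebra f \<longleftrightarrow> continuous_on (cball 0 1) f \<and> f holomorphic_on ball 0 1"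

lemma disc_algebra_const: "disc_algebra (\<lambda>_. c)"
  and disc_algebra_ident: "disc_algebra (\<lambda>w. w)"
  and disc_algebra_poly: "disc_algebra (poly p)"
  unfolding disc_algebra_def by (auto intro: continuous_intros holomorphic_intros)

lemma disc_algebra_minus: "disc_algebra f \<Longrightarrow> disc_algebra (\<lambda>w. - f w)"
  and disc_algebra_power: "disc_algebra f \<Longrightarrow> disc_algebra (\<lambda>w. f w ^ n)"
  unfolding disc_algebra_def by (auto intro: continuous_intros holomorphic_intros)

lemma disc_algebra_diff: "disc_algebra f \<Longrightarrow> disc_algebra g \<Longrightarrow> disc_algebra (\<lambda>w. f w - g w)"
  and disc_algebra_mult: "disc_algebra f \<Longrightarrow> disc_algebra g \<Longrightarrow> disc_algebra (\<lambda>w. f w * g w)"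
  unfolding disc_algebra_def by (auto intro: continuous_intros holomorphic_intros)

lemma disc_algebra_sum: "(\<And>i. i \<in> I \<Longrightarrow> disc_algebra (f i)) \<Longrightarrow> disc_algebra (\<lambda>w. \<Sum>i\<in>I. f i w)"
  and disc_algebra_prod: "(\<And>i. i \<in> I \<Longrightarrow> disc_algebra (f i)) \<Longrightarrow> disc_algebra (\<lambda>w. \<Prod>i\<in>I. f i w)"
  unfolding disc_algebra_def by (auto intro!: continuous_on_sum holomorphic_on_sum
      continuous_on_prod holomorphic_on_prod)

lemmas disc_algebra_intros = disc_algebra_const disc_algebra_ident disc_algebra_poly
  disc_algebra_minus disc_algebra_power disc_algebra_diff disc_algebra_mult
  disc_algebra_sum disc_algebra_prod

lemma disc_algebra_det:
  assumes "\<And>i j. disc_algebra (E i j)"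
  shows "disc_algebra (\<lambda>w. det (\<chi> i j. E i j w :: complex^'n::finite^'n))"
  unfolding det_def by (simp add: assms disc_algebra_intros)

lemma disc_algebra_cong: "disc_algebra f \<Longrightarrow> \<forall>w\<in>cball 0 1. g w = f w \<Longrightarrow> disc_algebra g"
  unfolding disc_algebra_def
  by (metis ball_subset_cball continuous_on_cong holomorphic_cong subsetD)

lemma disc_algebra_continuous_on_sphere: "disc_algebra f \<Longrightarrow> continuous_on (sphere 0 1) f"
  unfolding disc_algebra_def by (rule continuous_on_subset) auto

lemma cnj_mult_self_unit: "norm (z::complex) = 1 \<Longrightarrow> cnj z * z = 1"
  by (metis complex_norm_square mult.commute of_real_1 power_one)

lemma inverse_unit: "norm (z::complex) = 1 \<Longrightarrow> inverse z = cnj z"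
  using cnj_mult_self_unit[of z] by (metis inverse_unique mult.commute)

lemma continuous_on_cball_eq_off_finite:
  fixes f g :: "complex \<Rightarrow> complex"
  assumes "continuous_on (cball 0 1) f" "continuous_on (cball 0 1) g"
    and "finite Z" and eq: "\<forall>w\<in>ball 0 1 - Z. f w = g w"
  shows "\<forall>w\<in>cball 0 1. f w = g w"
proof
  fix w :: complex assume w: "w \<in> cball 0 1"
  then have "w islimpt ball 0 1" by (simp add: islimpt_ball)
  then have "w islimpt (Z \<union> (ball 0 1 - Z))" by (rule islimpt_subset) auto
  then have "w islimpt (ball 0 1 - Z)" using islimpt_Un_finite[OF \<open>finite Z\<close>] by blast
  then have w_cl: "w \<in> closure (ball 0 1 - Z)" by (simp add: closure_def)
  have "closed {x \<in> cball 0 1. f x - g x = 0}"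
    by (intro continuous_closed_preimage_constant continuous_on_diff assms(1,2)) auto
  moreover have "ball 0 1 - Z \<subseteq> {x \<in> cball 0 1. f x - g x = 0}" using eq by auto
  ultimately have "closure (ball 0 1 - Z) \<subseteq> {x \<in> cball 0 1. f x - g x = 0}"
    by (intro closure_minimal)
  then show "f w = g w" using w_cl by auto
qed

lemma reflection_integrand_eq:
  fixes c :: complex
  assumes nc: "norm c = 1" and refl: "\<phi> c = c ^ N * cnj (\<psi> c)" and "j \<ge> 1"
  shows "\<phi> c / c ^ Suc (N + j) * (2 * pi * \<i> * c) = - cnj (c ^ (j - 1) * \<psi> c * (2 * pi * \<i> * c))"
proof -
  have c0: "c \<noteq> 0" using nc by auto
  have ci: "cnj c = inverse c" using cnj_mult_self_unit[OF nc] c0 by (simp add: field_simps)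
  obtain j' where jj: "j = Suc j'" using \<open>j \<ge> 1\<close> by (cases j) auto
  have "\<phi> c / c ^ Suc (N + j) * (2 * pi * \<i> * c)
      = (c ^ N / (c ^ N * c ^ j * c) * c) * cnj (\<psi> c) * (2 * pi * \<i>)"
    unfolding refl power_Suc2 power_add by (simp only: divide_inverse mult_ac)
  also have "c ^ N / (c ^ N * c ^ j * c) * c = inverse c ^ j"
    using c0 by (simp add: power_inverse divide_inverse)
  also have "inverse c ^ j * cnj (\<psi> c) * (2 * pi * \<i>) = - cnj (c ^ (j - 1) * \<psi> c * (2 * pi * \<i> * c))"
    unfolding jj by (simp add: ci power_Suc2)
  finally show ?thesis .
qed

text \<open>If \<open>\<phi> = \<zeta>\<^sup>N conj \<psi>\<close> on the circle, the Cauchy integral of \<open>\<phi>/\<zeta>\<^sup>k\<^sup>+\<^sup>1\<close> is the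
  conjugate of the integral of the holomorphic function \<open>\<zeta>\<^sup>k\<^sup>-\<^sup>N\<^sup>-\<^sup>1 \<psi>\<close>, which is zero.\<close>
lemma higher_deriv_0_eq_0_of_reflection:
  assumes "disc_algebra \<phi>" "disc_algebra \<psi>"
    and refl: "\<forall>\<zeta>\<in>sphere 0 1. \<phi> \<zeta> = \<zeta>^N * cnj (\<psi> \<zeta>)" and "k > N"
  shows "(deriv ^^ k) \<phi> 0 = 0"
proof -
  define j where "j = k - N"
  have j1: "j \<ge> 1" and kj: "k = N + j" using assms(4) by (auto simp: j_def)
  have I1: "((\<lambda>u. \<phi> u / (u - 0) ^ (Suc k)) has_contour_integral
      ((2 * pi * \<i>) / (fact k) * (deriv ^^ k) \<phi> 0)) (circlepath 0 1)"
    using assms(1) unfolding disc_algebra_def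
    by (intro Cauchy_has_contour_integral_higher_derivative_circlepath) auto
  have G0: "((\<lambda>u. u^(j-1) * \<psi> u) has_contour_integral 0) (circlepath 0 1)"
  proof (rule Cauchy_theorem_disc[where K="{}" and a=0 and e=1])
    have hol: "(\<lambda>u. u ^ (j - 1) * \<psi> u) holomorphic_on ball 0 1"
      using assms(2) unfolding disc_algebra_def by (intro holomorphic_intros) auto
    show "continuous_on (cball 0 1) (\<lambda>u. u ^ (j - 1) * \<psi> u)"
      using assms(2) unfolding disc_algebra_def by (intro continuous_intros) auto
    fix x :: complex assume "x \<in> ball 0 1 - {}"
    then show "(\<lambda>u. u ^ (j - 1) * \<psi> u) field_differentiable at x"
      using holomorphic_on_imp_differentiable_at[OF hol] by simp
  qed (auto simp: path_image_circlepath)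
  let ?vd = "\<lambda>x. vector_derivative (circlepath 0 1) (at x within {0..1})"
  have G: "((\<lambda>x. - cnj ((circlepath 0 1 x)^(j-1) * \<psi> (circlepath 0 1 x) * ?vd x)) has_integral 0) {0..1}"
    using G0 has_integral_cnj[of "\<lambda>x. (circlepath 0 1 x)^(j-1) * \<psi> (circlepath 0 1 x) * ?vd x" 0 "{0..1}"]
    unfolding has_contour_integral_def by (auto simp: o_def dest: has_integral_neg)
  have "((\<lambda>x. \<phi> (circlepath 0 1 x) / (circlepath 0 1 x - 0) ^ Suc k * ?vd x) has_integral 0) {0..1}"
  proof (rule has_integral_eq[OF _ G])
    fix x :: real assume x: "x \<in> {0..1}"
    define c where "c = circlepath 0 1 x"
    have vd: "?vd x = 2 * pi * \<i> * c"
      using vector_derivative_circlepath01[of x 0 1] x by (simp add: c_def circlepath)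
    have nc: "norm c = 1" by (simp add: c_def circlepath norm_exp_i_times)
    then show "- cnj (c ^ (j - 1) * \<psi> c * ?vd x) = \<phi> c / (c - 0) ^ Suc k * ?vd x"
      using reflection_integrand_eq[OF nc _ j1] refl unfolding vd kj by simp
  qed
  then have "((\<lambda>u. \<phi> u / (u - 0) ^ (Suc k)) has_contour_integral 0) (circlepath 0 1)"
    unfolding has_contour_integral_def by simp
  then have "(2 * pi * \<i>) / (fact k) * (deriv ^^ k) \<phi> 0 = 0"
    by (rule has_contour_integral_unique[OF I1])
  then show ?thesis by simp
qed

lemma disc_algebra_reflection_poly:
  assumes "disc_algebra \<phi>" "disc_algebra \<psi>" and "\<forall>\<zeta>\<in>sphere 0 1. \<phi> \<zeta> = \<zeta>^N * cnj (\<psi> \<zeta>)"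
  shows "\<exists>p. degree p \<le> N \<and> (\<forall>w\<in>cball 0 1. \<phi> w = poly p w)"
proof -
  define p where "p = (\<Sum>k\<le>N. monom ((deriv ^^ k) \<phi> 0 / fact k) k)"
  have "degree p \<le> N" unfolding p_def
    by (rule degree_sum_le) (auto intro: order_trans[OF degree_monom_le])
  moreover have "\<forall>w\<in>ball 0 1. \<phi> w = poly p w"
  proof
    fix w :: complex assume w: "w \<in> ball 0 1"
    have "(\<lambda>n. (deriv ^^ n) \<phi> 0 / (fact n) * (w-0)^n) sums \<phi> w"
      using assms(1) w unfolding disc_algebra_def by (intro holomorphic_power_series) auto
    moreover have "(\<lambda>n. (deriv ^^ n) \<phi> 0 / (fact n) * (w-0)^n) sums poly p w"
    proof -
      have "poly p w = (\<Sum>n\<le>N. (deriv ^^ n) \<phi> 0 / (fact n) * (w-0)^n)"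
        by (simp add: p_def poly_sum poly_monom)
      then show ?thesis
        by (simp only:) (rule sums_finite, auto simp: higher_deriv_0_eq_0_of_reflection[OF assms])
    qed
    ultimately show "\<phi> w = poly p w" by (rule sums_unique2)
  qed
  then have "\<forall>w\<in>cball 0 1. \<phi> w = poly p w"
    using assms(1) unfolding disc_algebra_def
    by (intro continuous_on_cball_eq_off_finite[where Z="{}"]) (auto intro: continuous_intros)
  ultimately show ?thesis by blast
qed

lemma disc_algebra_const_of_reflection:
  assumes "disc_algebra \<phi>" "disc_algebra \<psi>" and "\<forall>\<zeta>\<in>sphere 0 1. \<phi> \<zeta> = cnj (\<psi> \<zeta>)"
  shows "\<forall>w\<in>cball 0 1. \<phi> w = \<phi> 1"
proof -
  obtain p where "degree p \<le> 0" "\<forall>w\<in>cball 0 1. \<phi> w = poly p w"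
    using disc_algebra_reflection_poly[of \<phi> \<psi> 0] assms by auto
  then show ?thesis by (auto elim!: degree_eq_zeroE)
qed

lemma continuous_on_sphere_eq_off_1:
  fixes F G :: "complex \<Rightarrow> complex"
  assumes "continuous_on (sphere 0 1) F" "continuous_on (sphere 0 1) G"
    and eq: "\<forall>\<zeta>\<in>sphere 0 1 - {1}. F \<zeta> = G \<zeta>"
  shows "\<forall>\<zeta>\<in>sphere 0 1. F \<zeta> = G \<zeta>"
proof -
  have "connected (sphere (0::complex) 1)" by (rule connected_sphere) simp
  moreover have "sphere (0::complex) 1 \<noteq> {x}" for x
    using norm_minus_cancel[of "1::complex"] by (metis mem_sphere_0 norm_one singletonD one_neq_neg_one)
  ultimately have "1 islimpt sphere (0::complex) 1"
    by (intro connected_imp_perfect) auto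
  moreover have "insert 1 (sphere (0::complex) 1 - {1}) = sphere 0 1" by auto
  ultimately have "1 islimpt (sphere (0::complex) 1 - {1})" by (metis islimpt_insert)
  then have one: "1 \<in> closure (sphere (0::complex) 1 - {1})" by (simp add: closure_def)
  have "closed {x \<in> sphere 0 1. F x - G x = 0}"
    by (intro continuous_closed_preimage_constant continuous_on_diff assms(1,2)) auto
  moreover have "sphere 0 1 - {1} \<subseteq> {x \<in> sphere 0 1. F x - G x = 0}" using eq by auto
  ultimately have "closure (sphere 0 1 - {1}) \<subseteq> {x \<in> sphere 0 1. F x - G x = 0}"
    by (intro closure_minimal)
  then have "F 1 = G 1" using one by auto
  then show ?thesis using eq by auto
qed

lemma reflection_of_Re_i_diff_eq_0:
  fixes \<zeta> w :: complex
  assumes z: "norm \<zeta> = 1" and "Re (\<i> * (inverse \<zeta> ^ k * w - \<zeta> ^ k * cnj w)) = 0"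
  shows "w = \<zeta> ^ (2 * k) * cnj w"
proof -
  define X where "X = cnj \<zeta> ^ k * w"
  have "inverse \<zeta> ^ k * w - \<zeta> ^ k * cnj w = X - cnj X"
    by (simp add: X_def inverse_unit[OF z])
  then have "Im X = 0" using assms(2) by simp
  then have cX: "cnj X = X" by (simp add: complex_eq_iff)
  have zz: "\<zeta> ^ k * cnj \<zeta> ^ k = 1"
    using cnj_mult_self_unit[OF z] by (metis mult.commute power_mult_distrib power_one)
  have "w = \<zeta> ^ k * X" using zz by (simp add: X_def mult.assoc[symmetric])
  also have "\<dots> = \<zeta> ^ k * cnj X" using cX by simp
  also have "\<dots> = \<zeta> ^ (2 * k) * cnj w" by (simp add: X_def power_add[symmetric] mult_2 mult.assoc)
  finally show ?thesis .
qed

lemma disc_algebra_eq_0_of_sphere: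
  assumes "disc_algebra f" and "\<forall>\<zeta>\<in>sphere 0 1. f \<zeta> = 0"
  shows "\<forall>w\<in>cball 0 1. f w = 0"
proof -
  have "\<forall>w\<in>cball 0 1. f w = f 1"
    using assms by (intro disc_algebra_const_of_reflection[OF _ disc_algebra_const[of 0]]) auto
  then show ?thesis using assms(2) by simp
qed

lemma disc_algebra_eq_0_of_Re_eq_0:
  assumes "disc_algebra f" and "\<forall>\<zeta>\<in>sphere 0 1. Re (f \<zeta>) = 0" and "f 1 = 0"
  shows "\<forall>w\<in>cball 0 1. f w = 0"
proof -
  have "\<forall>\<zeta>\<in>sphere 0 1. f \<zeta> = cnj (- f \<zeta>)" using assms(2) by (simp add: complex_eq_iff)
  then have "\<forall>w\<in>cball 0 1. f w = f 1"
    using assms(1) by (intro disc_algebra_const_of_reflection[OF _ disc_algebra_minus]) auto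
  then show ?thesis using assms(3) by simp
qed

lemma islimpt_convex:
  fixes S :: "'a::euclidean_space set"
  assumes "convex S" "interior S \<noteq> {}" "x \<in> S"
  shows "x islimpt S"
proof -
  have "x \<in> closure (interior S)"
    using assms convex_closure_interior closure_subset by blast
  then have "x islimpt closure (interior S)" by (intro islimpt_closure_open) auto
  then have "x islimpt interior S" by (simp only: limpt_of_closure)
  then show ?thesis by (rule islimpt_subset) (rule interior_subset)
qed

lemma islimpt_cball_Int_ball_1:
  assumes "0 < \<rho>" "\<rho> \<le> 1" "w \<in> cball 0 1 \<inter> ball 1 \<rho>"
  shows "w islimpt (cball 0 1 \<inter> ball (1::complex) \<rho>)"
proof (rule islimpt_convex)
  have "1 - complex_of_real (\<rho>/2) = complex_of_real (1 - \<rho>/2)" by simp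
  then have "norm (1 - complex_of_real (\<rho>/2)) < 1" "norm (complex_of_real (\<rho>/2)) < \<rho>"
    using assms by (simp_all only: norm_of_real)
  moreover have "dist 0 (1 - z) = norm (1 - z)" "dist 1 (1 - z) = norm z" for z :: complex
    by (simp_all add: dist_norm norm_minus_commute)
  ultimately have "1 - complex_of_real (\<rho>/2) \<in> ball 0 1 \<inter> ball 1 \<rho>"
    by (metis IntI mem_ball)
  moreover have "interior (cball 0 1 \<inter> ball 1 \<rho>) = ball 0 1 \<inter> ball (1::complex) \<rho>"
    by (simp add: interior_Int)
  ultimately show "interior (cball 0 1 \<inter> ball (1::complex) \<rho>) \<noteq> {}" by blast
  show "convex (cball 0 1 \<inter> ball (1::complex) \<rho>)" by (intro convex_Int convex_cball convex_ball)
qed (rule assms(3))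

lemma derivative_chain_eq_higher_deriv:
  assumes D: "\<forall>i<l. \<forall>w\<in>S. (Suc i < l \<or> w = a) \<longrightarrow>
      (D i has_field_derivative D (Suc i) w) (at w within S)"
    and D0: "\<forall>w\<in>S. D 0 w = \<phi> w" and hol: "\<phi> holomorphic_on U" "open U" "S \<subseteq> U"
    and lim: "\<forall>w\<in>S. w islimpt S" and "i \<le> l"
  shows "\<forall>w\<in>S. (i < l \<or> w = a) \<longrightarrow> D i w = (deriv ^^ i) \<phi> w"
  using \<open>i \<le> l\<close>
proof (induction i)
  case (Suc i)
  show ?case
  proof (intro ballI impI)
    fix w assume w: "w \<in> S" and c: "Suc i < l \<or> w = a"
    have "i < l" using Suc.prems by simp
    then have IH: "\<forall>w\<in>S. D i w = (deriv ^^ i) \<phi> w" using Suc.IH by simp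
    have "(D i has_field_derivative D (Suc i) w) (at w within S)"
      using D \<open>i < l\<close> c w by blast
    then have d1: "((deriv ^^ i) \<phi> has_field_derivative D (Suc i) w) (at w within S)"
      by (rule has_field_derivative_transform_within[where d=1]) (use w IH in auto)
    have "(deriv ^^ i) \<phi> holomorphic_on U" using hol by (intro holomorphic_higher_deriv)
    then have d2: "((deriv ^^ i) \<phi> has_field_derivative deriv ((deriv ^^ i) \<phi>) w) (at w within S)"
      using holomorphic_derivI hol w by blast
    have "at w within S \<noteq> bot" using lim w by (simp add: trivial_limit_within)
    then show "D (Suc i) w = (deriv ^^ Suc i) \<phi> w"
      using has_field_derivative_unique[OF d1 d2] by simp
  qed
qed (use D0 in simp)

lemma higher_deriv_eq_0_of_derivs_vanish_at_1:
  assumes "derivs_vanish_at_1 l f" and hol: "\<phi> holomorphic_on ball 1 \<rho>" and "0 < \<rho>"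
    and eq: "\<forall>w\<in>cball 0 1 \<inter> ball 1 \<rho>. f w = \<phi> w" and "j \<le> l"
  shows "(deriv ^^ j) \<phi> 1 = 0"
proof -
  obtain e D where "e > 0" and D0: "\<forall>w\<in>cball 0 1 \<inter> ball 1 e. D 0 w = f w"
    and D: "\<forall>i<l. \<forall>w\<in>cball 0 1 \<inter> ball 1 e. (Suc i < l \<or> w = 1) \<longrightarrow>
            (D i has_field_derivative D (Suc i) w) (at w within cball 0 1 \<inter> ball 1 e)"
    and Dz: "\<forall>j\<le>l. D j 1 = 0"
    using assms(1) unfolding derivs_vanish_at_1_def by (elim exE conjE) (rule that; assumption)
  define r where "r = min \<rho> (min e 1)"
  have r: "0 < r" "r \<le> \<rho>" "r \<le> e" "r \<le> 1" using \<open>e > 0\<close> \<open>0 < \<rho>\<close> by (simp_all add: r_def)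
  define S where "S = cball 0 1 \<inter> ball (1::complex) r"
  have "ball (1::complex) r \<subseteq> ball 1 e" "ball (1::complex) r \<subseteq> ball 1 \<rho>"
    using r by (simp_all add: subset_ball)
  then have S_sub: "S \<subseteq> cball 0 1 \<inter> ball 1 e" "S \<subseteq> cball 0 1 \<inter> ball 1 \<rho>" by (auto simp: S_def)
  have DS: "\<forall>i<l. \<forall>w\<in>S. (Suc i < l \<or> w = 1) \<longrightarrow> (D i has_field_derivative D (Suc i) w) (at w within S)"
  proof (intro allI impI ballI)
    fix i w assume "i < l" "w \<in> S" "Suc i < l \<or> w = 1"
    then have "(D i has_field_derivative D (Suc i) w) (at w within cball 0 1 \<inter> ball 1 e)"
      using D S_sub(1) by blast
    then show "(D i has_field_derivative D (Suc i) w) (at w within S)"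
      using DERIV_subset S_sub(1) by blast
  qed
  have D0S: "\<forall>w\<in>S. D 0 w = \<phi> w"
  proof
    fix w assume "w \<in> S"
    then have "w \<in> cball 0 1 \<inter> ball 1 e" "w \<in> cball 0 1 \<inter> ball 1 \<rho>" using S_sub by blast+
    then show "D 0 w = \<phi> w" using D0 eq by simp
  qed
  have "\<forall>w\<in>S. w islimpt S"
    unfolding S_def using islimpt_cball_Int_ball_1[OF r(1) r(4)] by blast
  moreover have "S \<subseteq> ball 1 \<rho>" using S_sub(2) by blast
  ultimately have "\<forall>w\<in>S. (j < l \<or> w = 1) \<longrightarrow> D j w = (deriv ^^ j) \<phi> w"
    by (intro derivative_chain_eq_higher_deriv[OF DS D0S hol open_ball _ _ \<open>j \<le> l\<close>])
  moreover have "1 \<in> S" using r by (simp add: S_def)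
  ultimately have "D j 1 = (deriv ^^ j) \<phi> 1" by blast
  then show ?thesis using Dz \<open>j \<le> l\<close> by simp
qed

lemma higher_deriv_poly: "(deriv ^^ n) (poly p) = poly ((pderiv ^^ n) (p :: complex poly))"
proof (induction n)
  case (Suc n)
  have "deriv (poly q) = poly (pderiv q)" for q :: "complex poly"
    by (rule ext, rule DERIV_imp_deriv) simp
  then show ?case using Suc by simp
qed simp

lemma higher_pderiv_eq_0: "degree p < n \<Longrightarrow> (pderiv ^^ n) p = 0"
  by (intro poly_eqI) (simp add: coeff_higher_pderiv coeff_eq_0)

lemma poly_eq_0_of_higher_deriv_vanish:
  fixes p :: "complex poly"
  assumes "\<forall>j\<le>l. (deriv ^^ j) (poly p) a = 0" and "degree p \<le> l"
  shows "p = 0"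
proof -
  have "poly p w = 0" for w
  proof -
    have "poly p holomorphic_on ball a (norm (w - a) + 1)" by (intro holomorphic_intros)
    then have "(\<lambda>n. (deriv ^^ n) (poly p) a / (fact n) * (w - a)^n) sums poly p w"
      by (rule holomorphic_power_series) (simp add: dist_norm norm_minus_commute)
    moreover have "(deriv ^^ n) (poly p) a = 0" for n
    proof (cases "n \<le> l")
      case True
      then show ?thesis using assms(1) by blast
    next
      case False
      then have "degree p < n" using assms(2) by linarith
      then show ?thesis by (simp add: higher_deriv_poly higher_pderiv_eq_0)
    qed
    then have "(\<lambda>n. (deriv ^^ n) (poly p) a / (fact n) * (w - a)^n) = (\<lambda>n. 0)" by simp
    ultimately show ?thesis using sums_0 sums_unique2 by metis
  qed
  then show ?thesis using poly_all_0_iff_0 by blast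
qed

lemma poly_eq_0_of_derivs_vanish_at_1:
  assumes dv: "derivs_vanish_at_1 l f" and q1: "poly q 1 \<noteq> 0"
    and eq: "\<forall>w\<in>cball 0 1. poly q w * f w = poly r w" and "degree r \<le> l"
  shows "r = 0"
proof -
  have "continuous (at 1) (poly q)" by (intro continuous_intros)
  then obtain \<rho> where "\<rho> > 0" and q_ne: "\<forall>w. dist 1 w < \<rho> \<longrightarrow> poly q w \<noteq> 0"
    using continuous_at_avoid[of 1 "poly q" 0] q1 by blast
  define \<phi> where "\<phi> = (\<lambda>w. poly r w / poly q w)"
  have q_ne': "poly q w \<noteq> 0" if "w \<in> ball 1 \<rho>" for w
    using q_ne that by simp
  have hol: "\<phi> holomorphic_on ball 1 \<rho>"
    unfolding \<phi>_def using q_ne' by (intro holomorphic_intros) auto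
  have "f w = \<phi> w" if "w \<in> cball 0 1 \<inter> ball 1 \<rho>" for w
  proof -
    have "poly q w * f w = poly r w" "poly q w \<noteq> 0" using eq q_ne' that by auto
    then show ?thesis by (simp add: \<phi>_def eq_divide_eq mult.commute)
  qed
  then have \<phi>_derivs: "(deriv ^^ j) \<phi> 1 = 0" if "j \<le> l" for j
    using higher_deriv_eq_0_of_derivs_vanish_at_1[OF dv hol \<open>\<rho> > 0\<close> _ that] by blast
  have "(deriv ^^ j) (poly r) 1 = 0" if "j \<le> l" for j
  proof -
    have "eventually (\<lambda>w. w \<in> ball (1::complex) \<rho>) (nhds 1)"
      using \<open>\<rho> > 0\<close> by (intro eventually_nhds_in_open) auto
    then have "eventually (\<lambda>w. poly r w = poly q w * \<phi> w) (nhds 1)"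
      by eventually_elim (use q_ne' in \<open>auto simp: \<phi>_def\<close>)
    then have "(deriv ^^ j) (poly r) 1 = (deriv ^^ j) (\<lambda>w. poly q w * \<phi> w) 1"
      by (rule higher_deriv_cong_ev) simp
    also have "\<dots> = (\<Sum>i = 0..j. of_nat (j choose i) * (deriv ^^ i) (poly q) 1 * (deriv ^^ (j-i)) \<phi> 1)"
      using \<open>\<rho> > 0\<close> by (intro higher_deriv_mult[OF _ hol]) (auto intro: holomorphic_intros)
    also have "\<dots> = 0" using \<phi>_derivs that by (intro sum.neutral) auto
    finally show ?thesis .
  qed
  then show ?thesis using poly_eq_0_of_higher_deriv_vanish \<open>degree r \<le> l\<close> by blast
qed

lemma disc_algebra_eq_0_of_reflection:
  assumes "disc_algebra f" "disc_algebra \<phi>" and q1: "poly q 1 \<noteq> 0"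
    and refl: "\<forall>\<zeta>\<in>sphere 0 1. poly q \<zeta> * f \<zeta> = \<zeta>^N * cnj (\<phi> \<zeta>)"
    and dv: "derivs_vanish_at_1 l f" and "N \<le> l"
  shows "\<forall>w\<in>cball 0 1. f w = 0"
proof -
  have "disc_algebra (\<lambda>w. poly q w * f w)" using assms(1) by (intro disc_algebra_intros)
  then obtain r where "degree r \<le> N" and r: "\<forall>w\<in>cball 0 1. poly q w * f w = poly r w"
    using disc_algebra_reflection_poly[OF _ assms(2) refl] by blast
  then have "r = 0" using poly_eq_0_of_derivs_vanish_at_1[OF dv q1] \<open>N \<le> l\<close> by auto
  then have "\<forall>w\<in>ball 0 1 - {x. poly q x = 0}. f w = 0" using r by auto
  moreover have "q \<noteq> 0" using q1 by auto
  ultimately show ?thesis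
    using assms(1) poly_roots_finite[of q] unfolding disc_algebra_def
    by (intro continuous_on_cball_eq_off_finite[where g="\<lambda>_. 0"]) auto
qed

section \<open>Reflected polynomials and Cramer's rule\<close>

lemma poly_eq_sum_atMost:
  fixes P :: "complex poly"
  assumes "degree P \<le> N"
  shows "poly P z = (\<Sum>k\<le>N. coeff P k * z ^ k)"
proof -
  have "poly P z = (\<Sum>k\<le>degree P. coeff P k * z ^ k)" by (rule poly_altdef)
  also have "\<dots> = (\<Sum>k\<le>N. coeff P k * z ^ k)"
    by (rule sum.mono_neutral_left) (use assms in \<open>auto simp: coeff_eq_0\<close>)
  finally show ?thesis .
qed

definition cnj_reflect :: "nat \<Rightarrow> complex poly \<Rightarrow> complex poly" where
  "cnj_reflect N P = (\<Sum>k\<le>N. monom (cnj (coeff P k)) (N - k))"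

lemma poly_cnj_reflect_1:
  assumes "degree P \<le> N"
  shows "poly (cnj_reflect N P) 1 = cnj (poly P 1)"
  unfolding cnj_reflect_def poly_sum poly_eq_sum_atMost[OF assms] by (simp add: poly_monom)

lemma poly_cnj_reflect_unit:
  assumes "degree P \<le> N" and z: "norm z = 1"
  shows "poly (cnj_reflect N P) z = z ^ N * cnj (poly P z)"
proof -
  have t: "z ^ N * cnj z ^ k = z ^ (N - k)" if "k \<le> N" for k
  proof -
    have "z ^ N = z ^ (N - k) * z ^ k" using that by (simp add: power_add[symmetric])
    then have "z ^ N * cnj z ^ k = z ^ (N - k) * (cnj z * z) ^ k"
      by (simp add: power_mult_distrib mult_ac)
    then show ?thesis using cnj_mult_self_unit[OF z] by simp
  qed
  have "z ^ N * cnj (poly P z) = (\<Sum>k\<le>N. cnj (coeff P k) * (z ^ N * cnj z ^ k))"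
    unfolding poly_eq_sum_atMost[OF assms(1)] by (simp add: sum_distrib_left mult_ac)
  also have "\<dots> = (\<Sum>k\<le>N. cnj (coeff P k) * z ^ (N - k))" by (intro sum.cong refl) (simp add: t)
  also have "\<dots> = poly (cnj_reflect N P) z" by (simp add: cnj_reflect_def poly_sum poly_monom)
  finally show ?thesis by simp
qed

lemma det_poly_matrix:
  fixes Pm :: "'n::finite \<Rightarrow> 'n \<Rightarrow> complex poly"
  assumes "\<And>i j. degree (Pm i j) \<le> k"
  shows "\<exists>P. degree P \<le> CARD('n) * k \<and> (\<forall>z. poly P z = det (\<chi> i j. poly (Pm i j) z :: complex^'n^'n))"
proof -
  define P where "P = (\<Sum>p\<in>{p. p permutes (UNIV::'n set)}. smult (of_int (sign p)) (\<Prod>i\<in>UNIV. Pm i (p i)))"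
  have "poly P z = det (\<chi> i j. poly (Pm i j) z :: complex^'n^'n)" for z
    by (simp add: P_def det_def poly_sum poly_prod)
  moreover have "degree P \<le> CARD('n) * k"
    unfolding P_def
  proof (rule degree_sum_le)
    show "finite {p. p permutes (UNIV::'n set)}" by (rule finite_permutations) simp
    fix p assume "p \<in> {p. p permutes (UNIV::'n set)}"
    have "degree (\<Prod>i\<in>UNIV. Pm i (p i)) \<le> (\<Sum>i\<in>UNIV. degree (Pm i (p i)))"
      using degree_prod_sum_le[of UNIV "\<lambda>i. Pm i (p i)"] by (simp add: o_def)
    also have "\<dots> \<le> (\<Sum>i\<in>(UNIV::'n set). k)" by (intro sum_mono assms)
    also have "\<dots> = CARD('n) * k" by simp
    finally show "degree (smult (of_int (sign p)) (\<Prod>i\<in>UNIV. Pm i (p i))) \<le> CARD('n) * k"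
      using degree_smult_le order_trans by blast
  qed
  ultimately show ?thesis by blast
qed

lemma cramer_conj:
  fixes Pm :: "'n::finite \<Rightarrow> 'n \<Rightarrow> complex poly" and B Fv :: "'n \<Rightarrow> complex \<Rightarrow> complex"
  assumes eq: "\<And>i. B i \<zeta> = (\<Sum>j\<in>UNIV. poly (Pm i j) \<zeta> * cnj (Fv j \<zeta>))"
  shows "det (\<chi> i j. if j = k then B i \<zeta> else poly (Pm i j) \<zeta> :: complex^'n^'n) =
         cnj (Fv k \<zeta>) * det (\<chi> i j. poly (Pm i j) \<zeta> :: complex^'n^'n)"
proof -
  define A where "A = (\<chi> i j. poly (Pm i j) \<zeta> :: complex^'n^'n)"
  define x where "x = (\<chi> j. cnj (Fv j \<zeta>) :: complex^'n)"
  have ax: "(A *v x) $ i = B i \<zeta>" for i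
    by (simp add: matrix_vector_mult_def A_def x_def eq)
  have "(\<chi> i j. if j = k then B i \<zeta> else poly (Pm i j) \<zeta> :: complex^'n^'n) =
             (\<chi> i j. if j = k then (A *v x) $ i else A $ i $ j)"
    by (simp add: vec_eq_iff ax, simp add: A_def)
  then show ?thesis using cramer_lemma[where A=A and k=k and x=x] by (simp add: A_def x_def)
qed

definition mono_deriv :: "('n::finite \<Rightarrow> nat) \<Rightarrow> ('n \<Rightarrow> complex) \<Rightarrow> ('n \<Rightarrow> complex) \<Rightarrow> complex" where
  "mono_deriv K c e = (\<Sum>j\<in>UNIV. dmono K j c * e j)"

definition Pz_deriv :: "('n::finite \<Rightarrow> nat) \<Rightarrow> nat \<Rightarrow> (('n \<Rightarrow> nat) \<Rightarrow> ('n \<Rightarrow> nat) \<Rightarrow> complex)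
    \<Rightarrow> 'n \<Rightarrow> ('n \<Rightarrow> complex) \<Rightarrow> ('n \<Rightarrow> complex) \<Rightarrow> ('n \<Rightarrow> complex) \<Rightarrow> ('n \<Rightarrow> complex) \<Rightarrow> complex" where
  "Pz_deriv M d \<alpha> i a b c e = (\<Sum>(J, K)\<in>idx M d. \<alpha> J K *
      (of_nat (J i) * mono_deriv (J(i := J i - 1)) a b * mono K c + dmono J i a * mono_deriv K c e))"

lemma dmono_eq_mono: "dmono J i z = of_nat (J i) * mono (J(i := J i - 1)) z"
  unfolding dmono_def mono_def by (intro arg_cong2[where f="(*)"] refl prod.cong) auto

lemma prod_power_decrement:
  fixes c :: "'n::finite \<Rightarrow> complex"
  shows "(\<Prod>l\<in>UNIV. c l ^ (if l = j then K l - 1 else K l)) = c j ^ (K j - 1) * (\<Prod>l\<in>UNIV - {j}. c l ^ K l)"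
proof -
  have "(\<Prod>l\<in>UNIV. c l ^ (if l = j then K l - 1 else K l)) =
        c j ^ (K j - 1) * (\<Prod>l\<in>UNIV - {j}. c l ^ (if l = j then K l - 1 else K l))"
    by (subst prod.remove[of UNIV j]) auto
  also have "(\<Prod>l\<in>UNIV - {j}. c l ^ (if l = j then K l - 1 else K l)) = (\<Prod>l\<in>UNIV - {j}. c l ^ K l)"
    by (intro prod.cong) auto
  finally show ?thesis .
qed

lemma mono_line_has_derivative:
  "((\<lambda>s. mono K (\<lambda>l. c l + s * e l)) has_field_derivative mono_deriv K c e) (at 0)"
proof -
  have d: "((\<lambda>s. (c l + s * e l) ^ K l) has_field_derivative (of_nat (K l) * c l ^ (K l - 1) * e l)) (at 0)" for l
    by (auto intro!: derivative_eq_intros)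
  have "((\<lambda>s. \<Prod>l\<in>UNIV. (c l + s * e l) ^ K l) has_field_derivative
        (\<Sum>l\<in>UNIV. (of_nat (K l) * c l ^ (K l - 1) * e l) * (\<Prod>y\<in>UNIV-{l}. (c y + 0 * e y) ^ K y))) (at 0)"
    by (rule has_field_derivative_prod) (rule d)
  moreover have "(\<Sum>l\<in>UNIV. (of_nat (K l) * c l ^ (K l - 1) * e l) * (\<Prod>y\<in>UNIV-{l}. (c y + 0 * e y) ^ K y)) = mono_deriv K c e"
    unfolding mono_deriv_def dmono_def prod_power_decrement by (intro sum.cong) auto
  ultimately show ?thesis unfolding mono_def by simp
qed

lemma dmono_line_has_derivative:
  "((\<lambda>s. dmono J i (\<lambda>l. c l + s * e l)) has_field_derivative
      of_nat (J i) * mono_deriv (J(i := J i - 1)) c e) (at 0)"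
  unfolding dmono_eq_mono by (intro DERIV_cmult mono_line_has_derivative)

lemma Pz_line_has_derivative:
  "((\<lambda>s. Pz M d \<alpha> i (\<lambda>l. a l + s * b l) (\<lambda>l. c l + s * e l)) has_field_derivative
      Pz_deriv M d \<alpha> i a b c e) (at 0)"
  unfolding Pz_def Pz_deriv_def
proof (rule DERIV_sum)
  fix p assume "p \<in> idx M d"
  obtain J K where p: "p = (J, K)" by (cases p)
  have m: "((\<lambda>s. dmono J i (\<lambda>l. a l + s * b l) * mono K (\<lambda>l. c l + s * e l)) has_field_derivative
     (of_nat (J i) * mono_deriv (J(i := J i - 1)) a b * mono K (\<lambda>l. c l + 0 * e l) +
        mono_deriv K c e * dmono J i (\<lambda>l. a l + 0 * b l))) (at 0)"
    by (rule DERIV_mult[OF dmono_line_has_derivative[of J i a b] mono_line_has_derivative[of K c e]])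
  have "((\<lambda>s. \<alpha> J K * (dmono J i (\<lambda>l. a l + s * b l) * mono K (\<lambda>l. c l + s * e l))) has_field_derivative
     \<alpha> J K * (of_nat (J i) * mono_deriv (J(i := J i - 1)) a b * mono K (\<lambda>l. c l + 0 * e l) +
        mono_deriv K c e * dmono J i (\<lambda>l. a l + 0 * b l))) (at 0)"
    by (rule DERIV_cmult[OF m])
  then show "((\<lambda>x. case p of (J, K) \<Rightarrow> \<alpha> J K * dmono J i (\<lambda>l. a l + x * b l) * mono K (\<lambda>l. c l + x * e l)) has_field_derivative
         (case p of (J, K) \<Rightarrow> \<alpha> J K * (of_nat (J i) * mono_deriv (J(i := J i - 1)) a b * mono K c + dmono J i a * mono_deriv K c e))) (at 0)"
    by (simp add: p mult.assoc mult.commute mult.left_commute)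
qed

lemma has_field_derivative_eq_0_of_Re_Im:
  assumes d: "(Zc has_field_derivative Z') (at 0)"
    and r: "((\<lambda>t. 2 * Re (Zc (of_real t))) has_real_derivative 0) (at 0)"
    and i: "((\<lambda>t. - 2 * Im (Zc (of_real t))) has_real_derivative 0) (at 0)"
  shows "Z' = 0"
proof -
  have v: "((\<lambda>t. Zc (of_real t)) has_vector_derivative Z') (at (0::real))"
    by (rule has_vector_derivative_real_field) (use d in simp)
  have r2: "((\<lambda>t. 2 * Re (Zc (of_real t))) has_real_derivative 2 * Re Z') (at 0)"
    by (intro DERIV_cmult has_field_derivative_Re v)
  have i2: "((\<lambda>t. - 2 * Im (Zc (of_real t))) has_real_derivative - 2 * Im Z') (at 0)"
    by (intro DERIV_cmult has_field_derivative_Im v)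
  have "2 * Re Z' = 0" using DERIV_unique[OF r2 r] .
  moreover have "- 2 * Im Z' = 0" using DERIV_unique[OF i2 i] .
  ultimately show ?thesis by (simp add: complex_eq_iff)
qed

lemma Re_has_field_derivative_eq_0:
  assumes d: "(Zc has_field_derivative Z') (at 0)"
    and r: "((\<lambda>t. Re (Zc (of_real t))) has_real_derivative 0) (at 0)"
  shows "Re Z' = 0"
proof -
  have v: "((\<lambda>t. Zc (of_real t)) has_vector_derivative Z') (at (0::real))"
    by (rule has_vector_derivative_real_field) (use d in simp)
  have r2: "((\<lambda>t. Re (Zc (of_real t))) has_real_derivative Re Z') (at 0)"
    by (intro has_field_derivative_Re v)
  show ?thesis using DERIV_unique[OF r2 r] .
qed

lemma mono_deriv_0_direction: "mono_deriv K c (\<lambda>_. 0) = 0"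
  by (simp add: mono_deriv_def)

lemma Pz_deriv_0_direction: "Pz_deriv M d \<alpha> i a (\<lambda>_. 0) c (\<lambda>_. 0) = 0"
  unfolding Pz_deriv_def by (intro sum.neutral) (auto simp: mono_deriv_0_direction)

section \<open>Weighted homogeneity\<close>

definition wscale :: "complex \<Rightarrow> ('n \<Rightarrow> nat) \<Rightarrow> ('n \<Rightarrow> complex) \<Rightarrow> ('n \<Rightarrow> complex)" where
  "wscale s M y = (\<lambda>l. s ^ M l * y l)"

lemma mono_wscale: "mono K (wscale s M y) = s ^ Mdot M K * mono K (y::'n::finite \<Rightarrow> complex)"
proof -
  have "mono K (wscale s M y) = (\<Prod>l\<in>UNIV. s ^ (M l * K l) * y l ^ K l)"
    unfolding mono_def wscale_def by (simp add: power_mult_distrib power_mult)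
  also have "\<dots> = (\<Prod>l\<in>UNIV. s ^ (M l * K l)) * (\<Prod>l\<in>UNIV. y l ^ K l)"
    by (rule prod.distrib)
  also have "(\<Prod>l\<in>UNIV. s ^ (M l * K l)) = s ^ Mdot M K"
    unfolding Mdot_def by (simp add: power_sum)
  finally show ?thesis unfolding mono_def by simp
qed

lemma Mdot_split: "Mdot M J = M i * J i + (\<Sum>l\<in>UNIV - {i}. M l * J (l::'n::finite))"
  unfolding Mdot_def by (subst sum.remove[of UNIV i]) auto

lemma Mdot_fun_upd_minus_1:
  assumes "J i \<ge> 1"
  shows "Mdot M (J(i := J i - 1)) = Mdot M J - M (i::'n::finite)"
proof -
  have r: "(\<Sum>l\<in>UNIV - {i}. M l * (J(i := J i - 1)) l) = (\<Sum>l\<in>UNIV - {i}. M l * J l)"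
    by (intro sum.cong) auto
  obtain k where k: "J i = Suc k" using assms by (cases "J i") auto
  have "M i * (J i - 1) + M i = M i * J i" unfolding k by simp
  then show ?thesis using Mdot_split[of M "J(i := J i - 1)" i] Mdot_split[of M J i] r by simp
qed

lemma weight_le_Mdot:
  assumes "K j \<ge> 1"
  shows "M j \<le> Mdot M (K::'n::finite \<Rightarrow> nat)"
proof -
  have "M j \<le> M j * K j" using assms by simp
  also have "\<dots> \<le> Mdot M K" unfolding Mdot_def by (rule member_le_sum) auto
  finally show ?thesis .
qed

lemma dmono_eq_0: "J i = 0 \<Longrightarrow> dmono J i z = 0"
  by (simp add: dmono_def)

lemma dmono_wscale: "dmono J i (wscale s M y) = s ^ (Mdot M J - M i) * dmono J i (y::'n::finite \<Rightarrow> complex)"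
proof (cases "J i = 0")
  case True then show ?thesis by (simp add: dmono_eq_0)
next
  case False
  then show ?thesis unfolding dmono_eq_mono mono_wscale using Mdot_fun_upd_minus_1[of J i M] by simp
qed

lemma mono_deriv_wscale: "mono_deriv K (wscale s M y) (wscale s M e) = s ^ Mdot M K * mono_deriv K y (e::'n::finite \<Rightarrow> complex)"
  unfolding mono_deriv_def sum_distrib_left
proof (rule sum.cong[OF refl])
  fix j
  show "dmono K j (wscale s M y) * wscale s M e j = s ^ Mdot M K * (dmono K j y * e j)"
  proof (cases "K j = 0")
    case True then show ?thesis by (simp add: dmono_eq_0)
  next
    case False
    then have "M j \<le> Mdot M K" by (intro weight_le_Mdot) auto
    then have "s ^ (Mdot M K - M j) * s ^ M j = s ^ Mdot M K" by (simp add: power_add[symmetric])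
    have "dmono K j (wscale s M y) * wscale s M e j = (s ^ (Mdot M K - M j) * s ^ M j) * (dmono K j y * e j)"
    proof -
      have e1: "dmono K j (wscale s M y) = s ^ (Mdot M K - M j) * dmono K j y" by (rule dmono_wscale)
      have e2: "wscale s M e j = s ^ M j * e j" by (simp add: wscale_def)
      show ?thesis unfolding e1 e2 by (simp only: mult_ac)
    qed
    then show ?thesis using \<open>s ^ (Mdot M K - M j) * s ^ M j = s ^ Mdot M K\<close> by simp
  qed
qed

definition Pz_deriv_dehom :: "('n::finite \<Rightarrow> nat) \<Rightarrow> nat \<Rightarrow> (('n \<Rightarrow> nat) \<Rightarrow> ('n \<Rightarrow> nat) \<Rightarrow> complex)
    \<Rightarrow> 'n \<Rightarrow> complex \<Rightarrow> ('n \<Rightarrow> complex) \<Rightarrow> ('n \<Rightarrow> complex) \<Rightarrow> ('n \<Rightarrow> complex) \<Rightarrow> ('n \<Rightarrow> complex) \<Rightarrow> complex" where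
  "Pz_deriv_dehom M d \<alpha> i u a b c e = (\<Sum>(J, K)\<in>idx M d. \<alpha> J K * u ^ Mdot M K *
      (of_nat (J i) * mono_deriv (J(i := J i - 1)) a b * mono K c + dmono J i a * mono_deriv K c e))"

lemma Pz_deriv_term_wscale:
  assumes dd: "Mdot M J + Mdot M K = d"
  shows "\<alpha> J K * (of_nat (J i) * mono_deriv (J(i := J i - 1)) (wscale s M a) (wscale s M b) * mono K (wscale (s * u) M c) +
           dmono J i (wscale s M a) * mono_deriv K (wscale (s * u) M c) (wscale (s * u) M e)) =
        s ^ (d - M i) * (\<alpha> J K * u ^ Mdot M K *
           (of_nat (J i) * mono_deriv (J(i := J i - 1)) a b * mono K c + dmono J i a * mono_deriv K c (e::'n::finite \<Rightarrow> complex)))"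
proof (cases "J i = 0")
  case True
  then show ?thesis by (simp add: dmono_eq_0)
next
  case False
  let ?J' = "J(i := J i - 1)"
  have Ji: "J i \<ge> 1" using False by simp
  have A: "mono_deriv ?J' (wscale s M a) (wscale s M b) = s ^ (Mdot M J - M i) * mono_deriv ?J' a b"
    unfolding mono_deriv_wscale Mdot_fun_upd_minus_1[of J i M, OF Ji] ..
  have C: "dmono J i (wscale s M a) = s ^ (Mdot M J - M i) * dmono J i a" by (rule dmono_wscale)
  have ge: "M i \<le> Mdot M J" using weight_le_Mdot[of J i M, OF Ji] .
  have E: "s ^ (Mdot M J - M i) * (s * u) ^ Mdot M K = s ^ (d - M i) * u ^ Mdot M K"
  proof -
    have "Mdot M J - M i + Mdot M K = d - M i" using dd ge by linarith
    then show ?thesis by (simp add: power_mult_distrib power_add[symmetric] mult.assoc)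
  qed
  have "\<alpha> J K * (of_nat (J i) * mono_deriv ?J' (wscale s M a) (wscale s M b) * mono K (wscale (s * u) M c) +
         dmono J i (wscale s M a) * mono_deriv K (wscale (s * u) M c) (wscale (s * u) M e)) =
        (s ^ (Mdot M J - M i) * (s * u) ^ Mdot M K) * (\<alpha> J K *
         (of_nat (J i) * mono_deriv ?J' a b * mono K c + dmono J i a * mono_deriv K c e))"
    unfolding A C mono_wscale mono_deriv_wscale using Mdot_fun_upd_minus_1[of J i M, OF Ji] by (simp add: algebra_simps)
  also have "\<dots> = s ^ (d - M i) * (\<alpha> J K * u ^ Mdot M K *
         (of_nat (J i) * mono_deriv ?J' a b * mono K c + dmono J i a * mono_deriv K c e))"
    unfolding E by (simp add: algebra_simps)
  finally show ?thesis .
qed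

lemma Pz_deriv_wscale:
  "Pz_deriv M d \<alpha> i (wscale s M a) (wscale s M b) (wscale (s*u) M c) (wscale (s*u) M e) = s ^ (d - M i) * Pz_deriv_dehom M d \<alpha> i u a b c e"
  unfolding Pz_deriv_def Pz_deriv_dehom_def sum_distrib_left
proof (intro sum.cong refl, clarsimp simp only: prod.case, goal_cases)
  case (1 J K)
  then show ?case by (intro Pz_deriv_term_wscale) (simp add: idx_def)
qed

section \<open>The coefficient polynomials of the linearized system\<close>

lemma power_mult_neg_inverse_power:
  fixes z :: complex
  assumes "z \<noteq> 0" "n \<le> k"
  shows "z ^ k * (-1 / z) ^ n = (-1) ^ n * z ^ (k - n)"
proof -
  have zk: "z ^ k = z ^ (k - n) * z ^ n" using assms(2) by (simp add: power_add[symmetric])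
  have "z * (-1 / z) = -1" using assms(1) by simp
  then have "z ^ n * (-1 / z) ^ n = (-1) ^ n" by (metis power_mult_distrib)
  then show ?thesis unfolding zk by (metis mult.assoc mult.commute)
qed

definition Qv_poly :: "('n::finite \<Rightarrow> nat) \<Rightarrow> nat \<Rightarrow> (('n \<Rightarrow> nat) \<Rightarrow> ('n \<Rightarrow> nat) \<Rightarrow> complex)
    \<Rightarrow> ('n \<Rightarrow> complex) \<Rightarrow> nat \<Rightarrow> 'n \<Rightarrow> 'n \<Rightarrow> complex poly" where
  "Qv_poly M d \<alpha> v k i j = (\<Sum>(J, K)\<in>idx M d.
     monom (\<alpha> J K * dmono J i v * dmono K j (\<lambda>l. cnj (v l)) * (-1) ^ (Mdot M K - M j)) (k - (Mdot M K - M j)))"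

definition Rv_poly :: "('n::finite \<Rightarrow> nat) \<Rightarrow> nat \<Rightarrow> (('n \<Rightarrow> nat) \<Rightarrow> ('n \<Rightarrow> nat) \<Rightarrow> complex)
    \<Rightarrow> ('n \<Rightarrow> complex) \<Rightarrow> nat \<Rightarrow> 'n \<Rightarrow> 'n \<Rightarrow> complex poly" where
  "Rv_poly M d \<alpha> v k i j = (\<Sum>(J, K)\<in>idx M d.
     monom (\<alpha> J K * of_nat (J i) * dmono (J(i := J i - 1)) j v * mono K (\<lambda>l. cnj (v l)) * (-1) ^ Mdot M K) (k - Mdot M K))"

lemma finite_idx:
  fixes M :: "'n::finite \<Rightarrow> nat"
  assumes "\<forall>i. M i > 0"
  shows "finite (idx M d)"
proof -
  have "idx M d \<subseteq> (PiE UNIV (\<lambda>_. {..d})) \<times> (PiE UNIV (\<lambda>_. {..d}))"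
  proof
    fix p assume p: "p \<in> idx M d"
    obtain J K where pJK: "p = (J, K)" by (cases p)
    have s: "Mdot M J + Mdot M K = d" using p by (simp add: pJK idx_def)
    have "J i \<le> d" for i
    proof -
      have "J i \<le> M i * J i" using assms by (auto simp: Suc_le_eq)
      also have "\<dots> \<le> Mdot M J" unfolding Mdot_def by (rule member_le_sum) auto
      finally show ?thesis using s by linarith
    qed
    moreover have "K i \<le> d" for i
    proof -
      have "K i \<le> M i * K i" using assms by (auto simp: Suc_le_eq)
      also have "\<dots> \<le> Mdot M K" unfolding Mdot_def by (rule member_le_sum) auto
      finally show ?thesis using s by linarith
    qed
    ultimately show "p \<in> (PiE UNIV (\<lambda>_. {..d})) \<times> (PiE UNIV (\<lambda>_. {..d}))"
      by (auto simp: pJK PiE_def extensional_def)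
  qed
  moreover have "finite ((PiE (UNIV::'n set) (\<lambda>_. {..d})) \<times> (PiE (UNIV::'n set) (\<lambda>_. {..d})))"
    by (intro finite_cartesian_product finite_PiE) auto
  ultimately show ?thesis by (rule finite_subset)
qed

lemma degree_Qv_poly:
  assumes "\<forall>i. M i > 0"
  shows "degree (Qv_poly M d \<alpha> v k i j) \<le> k"
  unfolding Qv_poly_def
  by (rule degree_sum_le[OF finite_idx[OF assms]]) (auto intro: order_trans[OF degree_monom_le])

lemma wscale_neg_inverse: "(\<lambda>l. (-1 / z) ^ M l * cnj (v l)) = wscale (-1 / z) M (\<lambda>l. cnj (v l))" by (simp add: wscale_def)

lemma poly_Qv_poly:
  assumes z: "z \<noteq> 0" and supp: "\<forall>J K. \<alpha> J K \<noteq> 0 \<longrightarrow> Mdot M K \<le> kzero M d \<alpha>"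
  shows "poly (Qv_poly M d \<alpha> v (kzero M d \<alpha>) i j) z = Qv_entry M d \<alpha> v i j z"
  unfolding Qv_poly_def Qv_entry_def Pzw_def poly_sum wscale_neg_inverse sum_distrib_left
proof (intro sum.cong refl, clarsimp simp only: prod.case poly_monom dmono_wscale, goal_cases)
  case (1 J K)
  show ?case
  proof (cases "\<alpha> J K = 0")
    case False
    then have "Mdot M K - M j \<le> kzero M d \<alpha>" using supp by fastforce
    then have "z ^ kzero M d \<alpha> * (-1 / z) ^ (Mdot M K - M j) =
        (-1) ^ (Mdot M K - M j) * z ^ (kzero M d \<alpha> - (Mdot M K - M j))"
      by (rule power_mult_neg_inverse_power[OF z])
    then show ?thesis by (simp add: algebra_simps)
  qed simp
qed

lemma poly_Rv_poly_mult:
  assumes z: "z \<noteq> 0" and supp: "\<forall>J K. \<alpha> J K \<noteq> 0 \<longrightarrow> Mdot M K \<le> kzero M d \<alpha>"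
  shows "poly (Rv_poly M d \<alpha> v (kzero M d \<alpha>) i j) z * x =
    (\<Sum>(J, K)\<in>idx M d. z ^ kzero M d \<alpha> * \<alpha> J K * (-1/z) ^ Mdot M K * of_nat (J i) *
      dmono (J(i := J i - 1)) j v * mono K (\<lambda>l. cnj (v l)) * x)"
  unfolding Rv_poly_def poly_sum sum_distrib_right
proof (intro sum.cong refl, clarsimp simp only: prod.case poly_monom, goal_cases)
  case (1 J K)
  show ?case
  proof (cases "\<alpha> J K = 0")
    case False
    then have "Mdot M K \<le> kzero M d \<alpha>" using supp by blast
    then have "z ^ kzero M d \<alpha> * (-1/z) ^ Mdot M K = (-1) ^ Mdot M K * z ^ (kzero M d \<alpha> - Mdot M K)"
      by (rule power_mult_neg_inverse_power[OF z])
    then show ?thesis by (simp add: algebra_simps)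
  qed simp
qed

lemma Qv_entry_mult:
  "Qv_entry M d \<alpha> v i j z * ((-1/z) ^ M j * x) =
    (\<Sum>(J, K)\<in>idx M d. z ^ kzero M d \<alpha> * \<alpha> J K * (-1/z) ^ Mdot M K *
      dmono J i v * dmono K j (\<lambda>l. cnj (v l)) * x)"
  unfolding Qv_entry_def Pzw_def wscale_neg_inverse sum_distrib_left sum_distrib_right
proof (intro sum.cong refl, clarsimp simp only: prod.case dmono_wscale, goal_cases)
  case (1 J K)
  show ?case
  proof (cases "K j = 0")
    case False
    then have "M j \<le> Mdot M K" by (intro weight_le_Mdot) auto
    then have "(-1/z) ^ (Mdot M K - M j) * (-1/z) ^ M j = (-1/z) ^ Mdot M K"
      by (simp flip: power_add)
    then show ?thesis by (simp add: algebra_simps)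
  qed (simp add: dmono_eq_0)
qed

lemma Pz_deriv_dehom_split:
  fixes z :: complex
  assumes z: "z \<noteq> 0" and supp: "\<forall>J K. \<alpha> J K \<noteq> 0 \<longrightarrow> Mdot M K \<le> kzero M d \<alpha>"
  shows "z ^ kzero M d \<alpha> * Pz_deriv_dehom M d \<alpha> i (-1/z) v f (\<lambda>l. cnj (v l)) e =
         (\<Sum>j\<in>UNIV. poly (Rv_poly M d \<alpha> v (kzero M d \<alpha>) i j) z * f j) +
         (\<Sum>j\<in>UNIV. Qv_entry M d \<alpha> v i j z * ((-1/z) ^ (M j) * e j))"
proof -
  define T1 where "T1 = (\<lambda>j (J, K). z ^ kzero M d \<alpha> * \<alpha> J K * (-1/z) ^ Mdot M K * of_nat (J i) *
      dmono (J(i := J i - 1)) j v * mono K (\<lambda>l. cnj (v l)) * f j)"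
  define T2 where "T2 = (\<lambda>j (J, K). z ^ kzero M d \<alpha> * \<alpha> J K * (-1/z) ^ Mdot M K *
      dmono J i v * dmono K j (\<lambda>l. cnj (v l)) * e j)"
  have "z ^ kzero M d \<alpha> * Pz_deriv_dehom M d \<alpha> i (-1/z) v f (\<lambda>l. cnj (v l)) e =
      (\<Sum>p\<in>idx M d. (\<Sum>j\<in>UNIV. T1 j p) + (\<Sum>j\<in>UNIV. T2 j p))"
    unfolding Pz_deriv_dehom_def mono_deriv_def sum_distrib_left
    by (intro sum.cong refl)
      (clarsimp simp: T1_def T2_def sum_distrib_left sum_distrib_right algebra_simps)
  also have "\<dots> = (\<Sum>j\<in>UNIV. \<Sum>p\<in>idx M d. T1 j p) + (\<Sum>j\<in>UNIV. \<Sum>p\<in>idx M d. T2 j p)"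
    by (simp add: sum.distrib sum.swap[of _ "idx M d"])
  finally show ?thesis
    unfolding T1_def T2_def poly_Rv_poly_mult[OF z supp] Qv_entry_mult .
qed

lemma Mdot_pos:
  assumes Mpos: "\<forall>i. M i > 0" and J: "J \<noteq> (\<lambda>_. 0)"
  shows "Mdot M (J::'n::finite \<Rightarrow> nat) \<ge> 1"
proof -
  obtain j where "J j \<noteq> 0" using J by auto
  then have "M j \<le> Mdot M J" by (intro weight_le_Mdot) auto
  then show ?thesis using Mpos by (metis less_le_trans less_one not_less)
qed

text \<open>If every monomial of \<open>P\<close> has more holomorphic than antiholomorphic weight, then
  \<open>w \<mapsto> P(w\<^sup>M z, conj (w\<^sup>M z))\<close> restricted to the circle extends holomorphically to the disc and
  vanishes at \<open>0\<close>; being real on the circle it is constant, so \<open>P(z, conj z) = 0\<close>.\<close>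
lemma Ppoly_eq_0_of_Mdot_less:
  assumes real: "\<forall>z. Im (Ppoly M d \<alpha> z (\<lambda>l. cnj (z l))) = 0"
    and less: "\<forall>J K. \<alpha> J K \<noteq> 0 \<longrightarrow> Mdot M K < Mdot M J"
  shows "Ppoly M d \<alpha> z (\<lambda>l. cnj (z l)) = 0"
proof -
  define cz where "cz = (\<lambda>l. cnj (z l))"
  define \<phi> where "\<phi> = (\<lambda>w. \<Sum>(J, K)\<in>idx M d. \<alpha> J K * w ^ (Mdot M J - Mdot M K) * mono J z * mono K cz)"
  have da: "disc_algebra \<phi>"
    unfolding \<phi>_def case_prod_beta by (intro disc_algebra_intros)
  have sph: "\<phi> w = Ppoly M d \<alpha> (wscale w M z) (\<lambda>l. cnj (wscale w M z l))" if "w \<in> sphere 0 1" for w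
  proof -
    have "cnj w * w = 1" using cnj_mult_self_unit that by simp
    then have cw: "w ^ n * cnj w ^ n = 1" for n by (metis mult.commute power_mult_distrib power_one)
    have monomial_eq: "\<alpha> J K * w ^ (Mdot M J - Mdot M K) * mono J z * mono K cz =
        \<alpha> J K * (w ^ Mdot M J * mono J z) * (cnj w ^ Mdot M K * mono K cz)" for J K
    proof (cases "\<alpha> J K = 0")
      case False
      then have "Mdot M J = (Mdot M J - Mdot M K) + Mdot M K" using less by fastforce
      then have "w ^ Mdot M J = w ^ (Mdot M J - Mdot M K) * w ^ Mdot M K"
        by (metis power_add)
      then show ?thesis using cw[of "Mdot M K"] by (simp add: algebra_simps)
    qed simp
    have cs: "(\<lambda>l. cnj (wscale w M z l)) = wscale (cnj w) M cz" by (simp add: wscale_def cz_def)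
    show ?thesis
      unfolding \<phi>_def Ppoly_def cs mono_wscale by (simp add: monomial_eq case_prod_beta)
  qed
  have "\<forall>w\<in>sphere 0 1. \<phi> w = cnj (\<phi> w)"
  proof
    fix w :: complex assume "w \<in> sphere 0 1"
    then have "Im (\<phi> w) = 0" using sph real by simp
    then show "\<phi> w = cnj (\<phi> w)" by (simp add: complex_eq_iff)
  qed
  then have "\<forall>w\<in>cball 0 1. \<phi> w = \<phi> 1" by (rule disc_algebra_const_of_reflection[OF da da])
  then have "\<phi> 0 = \<phi> 1" using mem_cball_0[of 0 1] by (metis zero_le_one norm_zero)
  moreover have "\<phi> 0 = 0" unfolding \<phi>_def
  proof (rule sum.neutral, clarify)
    fix J K
    show "\<alpha> J K * 0 ^ (Mdot M J - Mdot M K) * mono J z * mono K cz = 0"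
      using less[rule_format, of J K] by (cases "\<alpha> J K = 0") simp_all
  qed
  moreover have "\<phi> 1 = Ppoly M d \<alpha> z cz" unfolding \<phi>_def Ppoly_def by simp
  ultimately show ?thesis by (simp add: cz_def)
qed

lemma kzero_bounds:
  fixes M :: "'n::finite \<Rightarrow> nat"
  assumes Mpos: "\<forall>i. M i > 0"
    and supp: "\<forall>J K. \<alpha> J K \<noteq> 0 \<longrightarrow> Mdot M J + Mdot M K = d"
    and az: "\<forall>J K. (J = (\<lambda>_. 0) \<or> K = (\<lambda>_. 0)) \<longrightarrow> \<alpha> J K = 0"
    and real: "\<forall>z. Im (Ppoly M d \<alpha> z (\<lambda>l. cnj (z l))) = 0"
    and nonzero: "\<exists>z. Preal M d \<alpha> z \<noteq> 0"
  shows "\<forall>J K. \<alpha> J K \<noteq> 0 \<longrightarrow> Mdot M K \<le> kzero M d \<alpha>" and "kzero M d \<alpha> \<le> d - 1"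
proof -
  define S where "S = (\<lambda>k. d div 2 \<le> k \<and> k \<le> d - 1 \<and> (\<exists>J K. \<alpha> J K \<noteq> 0 \<and> Mdot M K = k))"
  have k0S: "kzero M d \<alpha> = Greatest S" by (simp add: kzero_def S_def)
  have inS: "S (Mdot M K)" if a: "\<alpha> J K \<noteq> 0" and b: "d div 2 \<le> Mdot M K" for J K
  proof -
    have "J \<noteq> (\<lambda>_. 0)" using a az by blast
    then have "Mdot M J \<ge> 1" using Mdot_pos[OF Mpos] by blast
    then have "Mdot M K \<le> d - 1" using supp a by fastforce
    then show ?thesis unfolding S_def using a b by blast
  qed
  have "\<exists>k. S k"
  proof (rule ccontr)
    assume "\<not> (\<exists>k. S k)"
    have "Mdot M K < Mdot M J" if a: "\<alpha> J K \<noteq> 0" for J K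
    proof -
      have "Mdot M K < d div 2" using inS[OF a] \<open>\<not> (\<exists>k. S k)\<close> by (meson not_le)
      then show ?thesis using supp a by fastforce
    qed
    then show False
      using Ppoly_eq_0_of_Mdot_less[OF real] nonzero unfolding Preal_def by (metis zero_complex.sel(1))
  qed
  then obtain k1 where k1: "S k1" by blast
  have bnd: "\<And>y. S y \<Longrightarrow> y \<le> d - 1" by (simp add: S_def)
  have Sk0: "S (kzero M d \<alpha>)" unfolding k0S by (rule GreatestI_nat[of S k1 "d - 1", OF k1 bnd])
  have le: "y \<le> kzero M d \<alpha>" if "S y" for y unfolding k0S by (rule Greatest_le_nat[of S y "d - 1", OF that bnd])
  show "\<forall>J K. \<alpha> J K \<noteq> 0 \<longrightarrow> Mdot M K \<le> kzero M d \<alpha>"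
  proof (intro allI impI)
    fix J K assume a: "\<alpha> J K \<noteq> 0"
    show "Mdot M K \<le> kzero M d \<alpha>"
    proof (cases "d div 2 \<le> Mdot M K")
      case True then show ?thesis using le inS[OF a] by blast
    next
      case False then show ?thesis using Sk0 by (simp add: S_def)
    qed
  qed
  show "kzero M d \<alpha> \<le> d - 1" using Sk0 by (simp add: S_def)
qed

section \<open>The linearized equations\<close>

lemma L_vanishes_atD:
  assumes "L_vanishes_at M d \<alpha> v g F \<zeta>"
  defines "p \<equiv> line_pt (f0_pt M d \<alpha> v g \<zeta>) F \<zeta>"
  shows "((\<lambda>t. rho1 M d \<alpha> (p t)) has_real_derivative 0) (at 0)"
    and "((\<lambda>t. rhoRe M d \<alpha> i (p t)) has_real_derivative 0) (at 0)"
    and "((\<lambda>t. rhoIm M d \<alpha> i (p t)) has_real_derivative 0) (at 0)"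
    and "((\<lambda>t. rhoLast (kzero M d \<alpha>) \<zeta> (p t)) has_real_derivative 0) (at 0)"
  using assms unfolding L_vanishes_at_def Let_def by blast+

lemma L_vanishes_at_first:
  assumes "L_vanishes_at M d \<alpha> v g (h, gg, ht, gt) \<zeta>" and h0: "\<forall>i. h i \<zeta> = 0"
  shows "Re (gg \<zeta>) = 0"
proof -
  define Z where "Z = (\<lambda>s. - (g \<zeta> + s * gg \<zeta>) + of_real (Preal M d \<alpha> (hv M v \<zeta>)))"
  have "(\<lambda>t. rho1 M d \<alpha> (line_pt (f0_pt M d \<alpha> v g \<zeta>) (h, gg, ht, gt) \<zeta> t)) = (\<lambda>t. Re (Z (of_real t)))"
    by (rule ext) (simp add: f0_pt_def line_pt_def rho1_def Z_def h0)
  then have "((\<lambda>t. Re (Z (of_real t))) has_real_derivative 0) (at 0)"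
    using L_vanishes_atD(1)[OF assms(1)] by simp
  moreover have "(Z has_field_derivative - gg \<zeta>) (at 0)"
    unfolding Z_def by (auto intro!: derivative_eq_intros)
  ultimately show ?thesis using Re_has_field_derivative_eq_0 by fastforce
qed

lemma L_vanishes_at_middle:
  assumes "L_vanishes_at M d \<alpha> v g (h, gg, ht, gt) \<zeta>"
  shows "ht i \<zeta> + 2 * (gt \<zeta> * Pz M d \<alpha> i (hv M v \<zeta>) (\<lambda>l. cnj (hv M v \<zeta> l)) +
      (- (\<zeta> ^ kzero M d \<alpha>) / 2) *
        Pz_deriv M d \<alpha> i (hv M v \<zeta>) (\<lambda>l. h l \<zeta>) (\<lambda>l. cnj (hv M v \<zeta> l)) (\<lambda>l. cnj (h l \<zeta>))) = 0"
proof -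
  define z0 where "z0 = hv M v \<zeta>"
  define zt0 where "zt0 = (\<lambda>i. \<zeta> ^ kzero M d \<alpha> * Pz M d \<alpha> i z0 (\<lambda>l. cnj (z0 l)))"
  define wt0 where "wt0 = - (\<zeta> ^ kzero M d \<alpha>) / 2"
  define p where "p = line_pt (z0, g \<zeta>, zt0, wt0) (h, gg, ht, gt) \<zeta>"
  define Z where "Z = (\<lambda>s. zt0 i + s * ht i \<zeta> + 2 * ((wt0 + s * gt \<zeta>) *
      Pz M d \<alpha> i (\<lambda>l. z0 l + s * h l \<zeta>) (\<lambda>l. cnj (z0 l) + s * cnj (h l \<zeta>))))"
  have "f0_pt M d \<alpha> v g \<zeta> = (z0, g \<zeta>, zt0, wt0)"
    by (simp add: f0_pt_def z0_def zt0_def wt0_def)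
  then have "((\<lambda>t. rhoRe M d \<alpha> i (p t)) has_real_derivative 0) (at 0)"
    and "((\<lambda>t. rhoIm M d \<alpha> i (p t)) has_real_derivative 0) (at 0)"
    using L_vanishes_atD(2,3)[OF assms, of i] unfolding p_def by simp_all
  moreover have "(\<lambda>t. rhoRe M d \<alpha> i (p t)) = (\<lambda>t. 2 * Re (Z (of_real t)))"
    and "(\<lambda>t. rhoIm M d \<alpha> i (p t)) = (\<lambda>t. - 2 * Im (Z (of_real t)))"
    by (rule ext, simp add: p_def line_pt_def rhoRe_def rhoIm_def Z_def)+
  moreover have "(Z has_field_derivative ht i \<zeta> + 2 * (gt \<zeta> * Pz M d \<alpha> i z0 (\<lambda>l. cnj (z0 l)) +
      wt0 * Pz_deriv M d \<alpha> i z0 (\<lambda>l. h l \<zeta>) (\<lambda>l. cnj (z0 l)) (\<lambda>l. cnj (h l \<zeta>)))) (at 0)"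
    unfolding Z_def by (auto intro!: derivative_eq_intros Pz_line_has_derivative)
  ultimately show ?thesis
    unfolding z0_def wt0_def using has_field_derivative_eq_0_of_Re_Im by metis
qed

lemma L_vanishes_at_last:
  assumes "L_vanishes_at M d \<alpha> v g (h, gg, ht, gt) \<zeta>"
  shows "Re (\<i> * (inverse \<zeta> ^ kzero M d \<alpha> * gt \<zeta> - \<zeta> ^ kzero M d \<alpha> * cnj (gt \<zeta>))) = 0"
proof -
  define k0 where "k0 = kzero M d \<alpha>"
  define zt0 where "zt0 = (\<lambda>i. \<zeta> ^ k0 * Pz M d \<alpha> i (hv M v \<zeta>) (\<lambda>l. cnj (hv M v \<zeta> l)))"
  define wt0 where "wt0 = - (\<zeta> ^ k0) / 2"
  define p where "p = line_pt (hv M v \<zeta>, g \<zeta>, zt0, wt0) (h, gg, ht, gt) \<zeta>"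
  define Z where "Z = (\<lambda>s. \<i> * (inverse \<zeta> ^ k0 * (wt0 + s * gt \<zeta>) - \<zeta> ^ k0 * (cnj wt0 + s * cnj (gt \<zeta>))))"
  have "f0_pt M d \<alpha> v g \<zeta> = (hv M v \<zeta>, g \<zeta>, zt0, wt0)"
    by (simp add: f0_pt_def zt0_def wt0_def k0_def)
  then have "((\<lambda>t. rhoLast k0 \<zeta> (p t)) has_real_derivative 0) (at 0)"
    using L_vanishes_atD(4)[OF assms] unfolding p_def k0_def by simp
  moreover have "(\<lambda>t. rhoLast k0 \<zeta> (p t)) = (\<lambda>t. Re (Z (of_real t)))"
    by (rule ext) (simp add: p_def line_pt_def rhoLast_def Z_def algebra_simps)
  moreover have "(Z has_field_derivative \<i> * (inverse \<zeta> ^ k0 * gt \<zeta> - \<zeta> ^ k0 * cnj (gt \<zeta>))) (at 0)"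
    unfolding Z_def by (auto intro!: derivative_eq_intros)
  ultimately show ?thesis
    unfolding k0_def using Re_has_field_derivative_eq_0 by metis
qed

text \<open>Away from \<open>\<zeta> = 1\<close> the middle components of \<open>L\<close> can be divided by \<open>(1 - \<zeta>)\<^sup>d\<^sup>-\<^sup>M\<^sup>i\<close>:
  on the circle \<open>conj (1 - \<zeta>) = (1 - \<zeta>)(-1/\<zeta>)\<close>, so weighted homogeneity factors this power out.\<close>
lemma kernel_boundary_system:
  fixes \<zeta> :: complex
  assumes z: "\<zeta> \<in> sphere 0 1" and z1: "\<zeta> \<noteq> 1"
    and supp: "\<forall>J K. \<alpha> J K \<noteq> 0 \<longrightarrow> Mdot M K \<le> kzero M d \<alpha>"
    and hb: "\<forall>l. h l \<zeta> = (1 - \<zeta>) ^ (M l) * f l \<zeta>"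
    and htb: "ht i \<zeta> = (1 - \<zeta>) ^ (d - M i) * ft i \<zeta>"
    and eq: "ht i \<zeta> + 2 * (gt \<zeta> * Pz M d \<alpha> i (hv M v \<zeta>) (\<lambda>l. cnj (hv M v \<zeta> l)) +
            (- (\<zeta> ^ kzero M d \<alpha>) / 2) * Pz_deriv M d \<alpha> i (hv M v \<zeta>) (\<lambda>l. h l \<zeta>) (\<lambda>l. cnj (hv M v \<zeta> l)) (\<lambda>l. cnj (h l \<zeta>))) = 0"
    and gt0: "gt \<zeta> = 0"
  shows "ft i \<zeta> - (\<Sum>j\<in>UNIV. poly (Rv_poly M d \<alpha> v (kzero M d \<alpha>) i j) \<zeta> * f j \<zeta>) =
         (\<Sum>j\<in>UNIV. poly (Qv_poly M d \<alpha> v (kzero M d \<alpha>) i j) \<zeta> * cnj ((- \<zeta>) ^ (M j) * f j \<zeta>))"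
proof -
  define k0 where "k0 = kzero M d \<alpha>"
  define s where "s = 1 - \<zeta>"
  define u where "u = -1 / \<zeta>"
  have nz: "norm \<zeta> = 1" using z by simp
  then have z0: "\<zeta> \<noteq> 0" by auto
  have s0: "s \<noteq> 0" using z1 by (simp add: s_def)
  have cs': "1 - cnj \<zeta> = (1 - \<zeta>) * u" and cu': "- cnj \<zeta> = u"
    using z0 by (simp_all add: u_def inverse_unit[OF nz, symmetric] field_simps)
  have e1: "hv M v \<zeta> = wscale s M v" by (simp add: hv_def wscale_def s_def)
  have e2: "(\<lambda>l. h l \<zeta>) = wscale s M (\<lambda>l. f l \<zeta>)" by (simp add: hb wscale_def s_def)
  have e3: "(\<lambda>l. cnj (hv M v \<zeta> l)) = wscale (s * u) M (\<lambda>l. cnj (v l))"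
    by (simp add: hv_def wscale_def cs' s_def)
  have e4: "(\<lambda>l. cnj (h l \<zeta>)) = wscale (s * u) M (\<lambda>l. cnj (f l \<zeta>))"
    by (simp add: hb wscale_def cs' s_def)
  have "ht i \<zeta> = \<zeta> ^ k0 * Pz_deriv M d \<alpha> i (hv M v \<zeta>) (\<lambda>l. h l \<zeta>) (\<lambda>l. cnj (hv M v \<zeta> l)) (\<lambda>l. cnj (h l \<zeta>))"
    using eq gt0 by (simp add: k0_def field_simps)
  also have "\<dots> = s ^ (d - M i) * (\<zeta> ^ k0 * Pz_deriv_dehom M d \<alpha> i u v (\<lambda>l. f l \<zeta>) (\<lambda>l. cnj (v l)) (\<lambda>l. cnj (f l \<zeta>)))"
    unfolding e3 e4 unfolding e1 e2 Pz_deriv_wscale by simp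
  finally have "s ^ (d - M i) * ft i \<zeta> = s ^ (d - M i) * (\<zeta> ^ k0 * Pz_deriv_dehom M d \<alpha> i u v (\<lambda>l. f l \<zeta>) (\<lambda>l. cnj (v l)) (\<lambda>l. cnj (f l \<zeta>)))"
    using htb by (simp add: s_def)
  then have ft: "ft i \<zeta> = \<zeta> ^ k0 * Pz_deriv_dehom M d \<alpha> i u v (\<lambda>l. f l \<zeta>) (\<lambda>l. cnj (v l)) (\<lambda>l. cnj (f l \<zeta>))"
    using s0 by simp
  also have "\<dots> = (\<Sum>j\<in>UNIV. poly (Rv_poly M d \<alpha> v k0 i j) \<zeta> * f j \<zeta>) +
         (\<Sum>j\<in>UNIV. Qv_entry M d \<alpha> v i j \<zeta> * (u ^ (M j) * cnj (f j \<zeta>)))"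
    unfolding u_def k0_def by (rule Pz_deriv_dehom_split[OF z0 supp])
  also have "(\<Sum>j\<in>UNIV. Qv_entry M d \<alpha> v i j \<zeta> * (u ^ (M j) * cnj (f j \<zeta>))) =
             (\<Sum>j\<in>UNIV. poly (Qv_poly M d \<alpha> v k0 i j) \<zeta> * cnj ((- \<zeta>) ^ (M j) * f j \<zeta>))"
    by (intro sum.cong refl) (simp add: poly_Qv_poly[OF z0 supp] k0_def cu')
  finally show ?thesis by (simp add: k0_def)
qed

section \<open>Uniqueness for the kernel of the linearized operator\<close>

text \<open>Cramer's rule turns the boundary system into the reflection identity
  \<open>det\<^sup>*(\<zeta>) h\<^sub>j(\<zeta>) = \<zeta>\<^sup>N conj ((1 - \<zeta>)\<^sup>m\<^sup>j \<Phi>\<^sub>j(\<zeta>))\<close> with \<open>\<Phi>\<^sub>j\<close> the Cramer determinant; this uses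
  \<open>conj (1 - \<zeta>) (- \<zeta>) = 1 - \<zeta>\<close> on the circle.\<close>
lemma disc_algebra_eq_0_of_reflected_system:
  fixes Pm :: "'n::finite \<Rightarrow> 'n \<Rightarrow> complex poly" and B f h :: "'n \<Rightarrow> complex \<Rightarrow> complex"
  assumes deg: "\<And>i j. degree (Pm i j) \<le> k"
    and det1: "det (\<chi> i j. poly (Pm i j) 1 :: complex^'n^'n) \<noteq> 0"
    and B: "\<And>i. disc_algebra (B i)" and f: "\<And>j. disc_algebra (f j)"
    and h: "\<And>j. \<forall>w\<in>cball 0 1. h j w = (1 - w) ^ m j * f j w"
    and sys: "\<And>i. \<forall>\<zeta>\<in>sphere 0 1. B i \<zeta> = (\<Sum>j\<in>UNIV. poly (Pm i j) \<zeta> * cnj ((- \<zeta>) ^ m j * f j \<zeta>))"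
    and dv: "derivs_vanish_at_1 l (h j)" and "CARD('n) * k \<le> l"
  shows "\<forall>w\<in>cball 0 1. h j w = 0"
proof -
  define N where "N = CARD('n) * k"
  obtain P where "degree P \<le> N" and P: "\<And>z. poly P z = det (\<chi> i j. poly (Pm i j) z :: complex^'n^'n)"
    using det_poly_matrix[of Pm k] deg unfolding N_def by blast
  define \<Phi> where "\<Phi> = (\<lambda>w. det (\<chi> i j'. if j' = j then B i w else poly (Pm i j') w :: complex^'n^'n))"
  have "disc_algebra (\<lambda>w. if j' = j then B i w else poly (Pm i j') w)" for i j'
    by (cases "j' = j") (simp_all add: B disc_algebra_poly)
  then have "disc_algebra \<Phi>" unfolding \<Phi>_def by (rule disc_algebra_det)
  then have da: "disc_algebra (\<lambda>w. (1 - w) ^ m j * \<Phi> w)" by (intro disc_algebra_intros)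
  have dh: "disc_algebra (h j)" using disc_algebra_cong[OF _ h] f by (simp add: disc_algebra_intros)
  have "poly (cnj_reflect N P) 1 \<noteq> 0" using det1 P poly_cnj_reflect_1[OF \<open>degree P \<le> N\<close>] by simp
  moreover have "\<forall>\<zeta>\<in>sphere 0 1. poly (cnj_reflect N P) \<zeta> * h j \<zeta> = \<zeta> ^ N * cnj ((1 - \<zeta>) ^ m j * \<Phi> \<zeta>)"
  proof
    fix \<zeta> :: complex assume z: "\<zeta> \<in> sphere 0 1"
    then have "cnj \<zeta> * \<zeta> = 1" using cnj_mult_self_unit by simp
    then have c1: "cnj (1 - \<zeta>) * (- \<zeta>) = 1 - \<zeta>" by (simp add: algebra_simps)
    have "\<Phi> \<zeta> = cnj ((- \<zeta>) ^ m j * f j \<zeta>) * poly P \<zeta>"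
      unfolding \<Phi>_def P by (rule cramer_conj) (use sys z in blast)
    then have "cnj ((1 - \<zeta>) ^ m j * \<Phi> \<zeta>) = (cnj (1 - \<zeta>) ^ m j * (- \<zeta>) ^ m j) * f j \<zeta> * cnj (poly P \<zeta>)"
      by (simp only: complex_cnj_mult complex_cnj_power complex_cnj_cnj mult_ac)
    also have "\<dots> = h j \<zeta> * cnj (poly P \<zeta>)"
      using h z unfolding power_mult_distrib[symmetric] c1 by auto
    finally show "poly (cnj_reflect N P) \<zeta> * h j \<zeta> = \<zeta> ^ N * cnj ((1 - \<zeta>) ^ m j * \<Phi> \<zeta>)"
      using poly_cnj_reflect_unit[OF \<open>degree P \<le> N\<close>] z by simp
  qed
  ultimately show ?thesis
    using disc_algebra_eq_0_of_reflection[OF dh da _ _ dv] \<open>CARD('n) * k \<le> l\<close> by (simp add: N_def)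
qed

lemma kernel_gt_eq_0:
  assumes "disc_algebra gt"
    and L: "\<forall>\<zeta>\<in>sphere 0 1. L_vanishes_at M d \<alpha> v g (h, gg, ht, gt) \<zeta>"
    and dv: "derivs_vanish_at_1 l gt" and "2 * kzero M d \<alpha> \<le> l"
  shows "\<forall>w\<in>cball 0 1. gt w = 0"
proof -
  have refl: "\<forall>\<zeta>\<in>sphere 0 1. poly 1 \<zeta> * gt \<zeta> = \<zeta> ^ (2 * kzero M d \<alpha>) * cnj (gt \<zeta>)"
  proof
    fix \<zeta> :: complex assume z: "\<zeta> \<in> sphere 0 1"
    have "gt \<zeta> = \<zeta> ^ (2 * kzero M d \<alpha>) * cnj (gt \<zeta>)"
    proof (rule reflection_of_Re_i_diff_eq_0)
      show "norm \<zeta> = 1" using z by simp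
      show "Re (\<i> * (inverse \<zeta> ^ kzero M d \<alpha> * gt \<zeta> - \<zeta> ^ kzero M d \<alpha> * cnj (gt \<zeta>))) = 0"
        using L z by (intro L_vanishes_at_last) blast
    qed
    then show "poly 1 \<zeta> * gt \<zeta> = \<zeta> ^ (2 * kzero M d \<alpha>) * cnj (gt \<zeta>)" by (simp only: poly_1 mult_1)
  qed
  show ?thesis
    by (rule disc_algebra_eq_0_of_reflection[OF assms(1,1) _ refl dv \<open>2 * kzero M d \<alpha> \<le> l\<close>]) simp
qed

lemma kernel_h_eq_0:
  fixes M :: "'n::finite \<Rightarrow> nat"
  assumes Mpos: "\<forall>i. M i > 0" and supp: "\<forall>J K. \<alpha> J K \<noteq> 0 \<longrightarrow> Mdot M K \<le> kzero M d \<alpha>"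
    and Q1: "Qv M d \<alpha> v 1 \<noteq> 0"
    and f: "\<And>i. disc_algebra (f i)" "\<And>i. \<forall>w\<in>cball 0 1. h i w = (1 - w) ^ M i * f i w"
    and ft: "\<And>i. disc_algebra (ft i)" "\<And>i. \<forall>w\<in>cball 0 1. ht i w = (1 - w) ^ (d - M i) * ft i w"
    and gt0: "\<forall>w\<in>cball 0 1. gt w = 0"
    and L: "\<forall>\<zeta>\<in>sphere 0 1. L_vanishes_at M d \<alpha> v g (h, gg, ht, gt) \<zeta>"
    and dv: "derivs_vanish_at_1 l (h j)" and "CARD('n) * kzero M d \<alpha> \<le> l"
  shows "\<forall>w\<in>cball 0 1. h j w = 0"
proof -
  define k0 where "k0 = kzero M d \<alpha>"
  define B where "B = (\<lambda>i w. ft i w - (\<Sum>j\<in>UNIV. poly (Rv_poly M d \<alpha> v k0 i j) w * f j w))"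
  have B: "disc_algebra (B i)" for i
    unfolding B_def by (intro disc_algebra_intros ft(1) f(1))
  have sys: "\<forall>\<zeta>\<in>sphere 0 1. B i \<zeta> = (\<Sum>j\<in>UNIV. poly (Qv_poly M d \<alpha> v k0 i j) \<zeta> * cnj ((- \<zeta>) ^ M j * f j \<zeta>))"
    for i
  proof (rule continuous_on_sphere_eq_off_1)
    have "continuous_on (sphere 0 1) (f j)" for j
      by (rule disc_algebra_continuous_on_sphere[OF f(1)])
    then show "continuous_on (sphere 0 1)
        (\<lambda>\<zeta>. \<Sum>j\<in>UNIV. poly (Qv_poly M d \<alpha> v k0 i j) \<zeta> * cnj ((- \<zeta>) ^ M j * f j \<zeta>))"
      by (intro continuous_intros)
    show "\<forall>\<zeta>\<in>sphere 0 1 - {1}. B i \<zeta> = (\<Sum>j\<in>UNIV. poly (Qv_poly M d \<alpha> v k0 i j) \<zeta> * cnj ((- \<zeta>) ^ M j * f j \<zeta>))"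
    proof
      fix \<zeta> :: complex assume "\<zeta> \<in> sphere 0 1 - {1}"
      then have z: "\<zeta> \<in> sphere 0 1" "\<zeta> \<noteq> 1" and "\<zeta> \<in> cball 0 1" by auto
      then have "\<forall>l. h l \<zeta> = (1 - \<zeta>) ^ M l * f l \<zeta>" "ht i \<zeta> = (1 - \<zeta>) ^ (d - M i) * ft i \<zeta>"
        and "gt \<zeta> = 0" using f(2) ft(2) gt0 by blast+
      moreover have "L_vanishes_at M d \<alpha> v g (h, gg, ht, gt) \<zeta>" using L z by blast
      ultimately show "B i \<zeta> = (\<Sum>j\<in>UNIV. poly (Qv_poly M d \<alpha> v k0 i j) \<zeta> * cnj ((- \<zeta>) ^ M j * f j \<zeta>))"
        unfolding B_def k0_def using kernel_boundary_system[OF z supp] L_vanishes_at_middle by blast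
    qed
  qed (rule disc_algebra_continuous_on_sphere[OF B])
  have "det (\<chi> i j. poly (Qv_poly M d \<alpha> v k0 i j) 1 :: complex^'n^'n) = Qv M d \<alpha> v 1"
    by (simp add: Qv_def k0_def poly_Qv_poly[OF _ supp])
  then show ?thesis
    using disc_algebra_eq_0_of_reflected_system[where Pm="\<lambda>i j. Qv_poly M d \<alpha> v k0 i j" and k=k0,
        OF degree_Qv_poly[OF Mpos] _ B f sys dv] Q1
      \<open>CARD('n) * kzero M d \<alpha> \<le> l\<close> by (simp add: k0_def)
qed

lemma kernel_ht_eq_0:
  assumes "disc_algebra (ht i)"
    and h0: "\<forall>j. \<forall>w\<in>cball 0 1. h j w = 0" and gt0: "\<forall>w\<in>cball 0 1. gt w = 0"
    and L: "\<forall>\<zeta>\<in>sphere 0 1. L_vanishes_at M d \<alpha> v g (h, gg, ht, gt) \<zeta>"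
  shows "\<forall>w\<in>cball 0 1. ht i w = 0"
proof (rule disc_algebra_eq_0_of_sphere[OF assms(1)], rule ballI)
  fix \<zeta> :: complex assume z: "\<zeta> \<in> sphere 0 1"
  then have "(\<lambda>l. h l \<zeta>) = (\<lambda>_. 0)" "(\<lambda>l. cnj (h l \<zeta>)) = (\<lambda>_. 0)" "gt \<zeta> = 0"
    using h0 gt0 by auto
  then show "ht i \<zeta> = 0"
    using L_vanishes_at_middle[of M d \<alpha> v g h gg ht gt \<zeta> i] L z by (simp add: Pz_deriv_0_direction)
qed

lemma kernel_gg_eq_0:
  assumes "disc_algebra gg" and "gg 1 = 0"
    and h0: "\<forall>j. \<forall>w\<in>cball 0 1. h j w = 0"
    and L: "\<forall>\<zeta>\<in>sphere 0 1. L_vanishes_at M d \<alpha> v g (h, gg, ht, gt) \<zeta>"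
  shows "\<forall>w\<in>cball 0 1. gg w = 0"
proof (rule disc_algebra_eq_0_of_Re_eq_0[OF assms(1) _ assms(2)], rule ballI)
  fix \<zeta> :: complex assume "\<zeta> \<in> sphere 0 1"
  then show "Re (gg \<zeta>) = 0" using L h0 by (intro L_vanishes_at_first) auto
qed

lemma A_space_disc_algebra: "f \<in> A_space k a \<Longrightarrow> disc_algebra f"
  by (simp add: A_space_def disc_algebra_def)

lemma A0_space_factor:
  assumes "F \<in> A0_space k a m"
  obtains f where "disc_algebra f" "\<forall>\<zeta>\<in>cball 0 1. F \<zeta> = (1 - \<zeta>) ^ m * f \<zeta>"
  using assms A_space_disc_algebra unfolding A0_space_def by blast

lemma A0_space_disc_algebra:
  assumes "F \<in> A0_space k a m"
  shows "disc_algebra F"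
proof -
  obtain f where "disc_algebra f" and F: "\<forall>\<zeta>\<in>cball 0 1. F \<zeta> = (1 - \<zeta>) ^ m * f \<zeta>"
    using A0_space_factor[OF assms] by blast
  then have "disc_algebra (\<lambda>\<zeta>. (1 - \<zeta>) ^ m * f \<zeta>)" by (intro disc_algebra_intros)
  then show ?thesis using F by (rule disc_algebra_cong)
qed

lemma kernel_eq_0:
  fixes M :: "'n::finite \<Rightarrow> nat"
  assumes Mpos: "\<forall>i. M i > 0" and supp: "\<forall>J K. \<alpha> J K \<noteq> 0 \<longrightarrow> Mdot M K \<le> kzero M d \<alpha>"
    and Q1: "Qv M d \<alpha> v 1 \<noteq> 0"
    and "2 * kzero M d \<alpha> \<le> l" and "CARD('n) * kzero M d \<alpha> \<le> l"
    and Y: "F \<in> Y_space k a M d"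
    and L: "\<forall>\<zeta>\<in>sphere 0 1. L_vanishes_at M d \<alpha> v g F \<zeta>"
    and dv: "disc4_derivs_vanish_at_1 l F"
  shows "disc4_zero F"
proof -
  obtain h gg ht gt where F: "F = (h, gg, ht, gt)" by (cases F)
  have hA: "\<And>i. h i \<in> A0_space k a (M i)" and ggA: "gg \<in> A0_space k a 1"
    and htA: "\<And>i. ht i \<in> A0_space k a (d - M i)" and gtA: "gt \<in> A_space k a"
    using Y by (auto simp: F Y_space_def)
  have dv_h: "\<And>i. derivs_vanish_at_1 l (h i)" and dv_gt: "derivs_vanish_at_1 l gt"
    using dv by (simp_all add: F disc4_derivs_vanish_at_1_def)
  have "\<forall>i. \<exists>fi. disc_algebra fi \<and> (\<forall>\<zeta>\<in>cball 0 1. h i \<zeta> = (1 - \<zeta>) ^ M i * fi \<zeta>)"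
    using hA A0_space_factor by metis
  then obtain f where f: "\<And>i. disc_algebra (f i)" "\<And>i. \<forall>\<zeta>\<in>cball 0 1. h i \<zeta> = (1 - \<zeta>) ^ M i * f i \<zeta>"
    by metis
  have "\<forall>i. \<exists>fi. disc_algebra fi \<and> (\<forall>\<zeta>\<in>cball 0 1. ht i \<zeta> = (1 - \<zeta>) ^ (d - M i) * fi \<zeta>)"
    using htA A0_space_factor by metis
  then obtain ft where ft: "\<And>i. disc_algebra (ft i)"
      "\<And>i. \<forall>\<zeta>\<in>cball 0 1. ht i \<zeta> = (1 - \<zeta>) ^ (d - M i) * ft i \<zeta>"
    by metis
  obtain g1 where "\<forall>\<zeta>\<in>cball 0 1. gg \<zeta> = (1 - \<zeta>) ^ 1 * g1 \<zeta>"
    using A0_space_factor[OF ggA] by blast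
  then have "gg 1 = 0" by simp
  have L': "\<forall>\<zeta>\<in>sphere 0 1. L_vanishes_at M d \<alpha> v g (h, gg, ht, gt) \<zeta>" using L F by simp
  have gt0: "\<forall>w\<in>cball 0 1. gt w = 0"
    by (rule kernel_gt_eq_0[OF A_space_disc_algebra[OF gtA] L' dv_gt]) fact
  have h0: "\<forall>j. \<forall>w\<in>cball 0 1. h j w = 0"
    using kernel_h_eq_0[OF Mpos supp Q1 f ft gt0 L' dv_h] \<open>CARD('n) * kzero M d \<alpha> \<le> l\<close> by blast
  have "\<forall>i. \<forall>w\<in>cball 0 1. ht i w = 0"
    using kernel_ht_eq_0[OF A0_space_disc_algebra[OF htA] h0 gt0 L'] by blast
  moreover have "\<forall>w\<in>cball 0 1. gg w = 0"
    by (rule kernel_gg_eq_0[OF A0_space_disc_algebra[OF ggA] \<open>gg 1 = 0\<close> h0 L'])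
  ultimately show ?thesis using h0 gt0 unfolding F disc4_zero_def by blast
qed

theorem mainTheorem7:
  fixes M :: "'n::finite \<Rightarrow> nat" and d :: nat
    and \<alpha> :: "('n \<Rightarrow> nat) \<Rightarrow> ('n \<Rightarrow> nat) \<Rightarrow> complex"
    and v :: "'n \<Rightarrow> complex" and g :: "complex \<Rightarrow> complex"
    and k :: nat and a :: real
  assumes M_pos_even: "\<forall>i. M i > 0 \<and> even (M i)"
    and d_even: "even d"
    and alpha_support: "\<forall>J K. \<alpha> J K \<noteq> 0 \<longrightarrow> Mdot M J + Mdot M K = d"
    and alpha_zero: "\<forall>J K. (J = (\<lambda>_. 0) \<or> K = (\<lambda>_. 0)) \<longrightarrow> \<alpha> J K = 0"
    and P_real: "\<forall>z. Im (Ppoly M d \<alpha> z (\<lambda>l. cnj (z l))) = 0"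
    and P_nonzero: "\<exists>z. Preal M d \<alpha> z \<noteq> 0"
    and adm: "admissible_pair M d \<alpha> v g"
    and g1: "g 1 = 0"
    and k_ge: "k \<ge> 1" and a_pos: "0 < a" and a_lt: "a < 1"
  shows "\<exists>l0::nat. l0 \<le> 6 * CARD('n) * d \<and>
           (\<forall>F\<in>Y_space k a M d.
              (\<forall>\<zeta>\<in>sphere 0 1. L_vanishes_at M d \<alpha> v g F \<zeta>) \<and>
              disc4_derivs_vanish_at_1 l0 F \<longrightarrow> disc4_zero F)"
proof -
  \<comment> \<open>Only positivity of \<open>M\<close>, the bounds on \<open>k\<^sub>0\<close> and \<open>Q\<^sup>v(1) \<noteq> 0\<close> are used.\<close>
  have Mpos: "\<forall>i. M i > 0" using M_pos_even by blast
  note k0 = kzero_bounds[OF Mpos alpha_support alpha_zero P_real P_nonzero]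
  have Q1: "Qv M d \<alpha> v 1 \<noteq> 0" using adm by (simp add: admissible_pair_def)
  have "d \<le> CARD('n) * d" by simp
  moreover have "CARD('n) * kzero M d \<alpha> \<le> CARD('n) * d" using k0(2) by simp
  ultimately have "2 * kzero M d \<alpha> \<le> 6 * CARD('n) * d" and "CARD('n) * kzero M d \<alpha> \<le> 6 * CARD('n) * d"
    using k0(2) by linarith+
  then show ?thesis using kernel_eq_0[OF Mpos k0(1) Q1] by blast
qed

end
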